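(* For any right canonical matrix $Y$ for $T$ at $\lambda_0$ there exists a left canonical matrix $V$ for $T$ at $\lambda_0$ such that $T^{-1}\doteq Y\Delta^{-1}V$. Such a $V\in\mathcal{H}^{r\times n}$ (i.e. any $V\in\mathcal{H}^{r\times n}$ with $T^{-1}\doteq Y\Delta^{-1}V$) is determined uniquely up to addition of a matrix of the form $\Delta H$ with $H\in\mathcal{H}^{r\times n}$. For any such $V$ one has the biorthogonality condition $\Delta^{-1}VTY\Delta^{-1}\doteq\Delta^{-1}$.
   Context: Let $\Omega\subset\mathbb{C}$ be open and $\lambda_0\in\Omega$ fixed. $\mathcal{H}$ denotes the ring of holomorphic functions on $\Omega$, $\mathcal{M}$ the field of meromorphic functions on $\Omega$, and $\mathcal{H}_0$ the ring of functions holomorphic in some neighborhood of $\lambda_0$. Write $\chi_0(\lambda)=\lambda-\lambda_0$. A matrix $M\in\mathcal{H}_0^{n\times n}$ is unimodular if it has an inverse in $\mathcal{H}_0^{n\times n}$. For meromorphic matrices $M_1,M_2$ of equal size, $M_1\doteq M_2$ means that $M_2-M_1$ is holomorphic in a neighborhood of $\lambda_0$. Throughout, $T\in\mathcal{H}^{n\times n}$ with $\det T$ not identically zero and $\det T(\lambda_0)=0$, and $r=\dim\ker T(\lambda_0)$. There exist unimodular $U_L,U_R\in\mathcal{H}_0^{n\times n}$ and uniquely determined integers $m_1\ge\cdots\ge m_n\ge 0$ (the partial multiplicities) with $U_LTU_R=\mathrm{diag}(\chi_0^{m_1},\dots,\chi_0^{m_n})$; $m_i>0$ exactly for $i\le r$.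 Set $\Delta=\mathrm{diag}(\chi_0^{m_1},\dots,\chi_0^{m_r})$. A root function for $T$ at $\lambda_0$ is $y\in\mathcal{H}^n$ with $y(\lambda_0)\neq0$ and $T(\lambda_0)y(\lambda_0)=0$; its multiplicity $\nu(y)$ is the order of the zero of $Ty$ at $\lambda_0$. A right canonical matrix for $T$ at $\lambda_0$ is $Y\in\mathcal{H}^{n\times r}$ whose columns $y_1,\dots,y_r$ are root functions such that (a) $y_1(\lambda_0),\dots,y_r(\lambda_0)$ are linearly independent, (b) $\sum_{i=1}^r\nu(y_i)=\sum_{i=1}^r m_i$, (c) $\nu(y_1)\ge\cdots\ge\nu(y_r)$. A left root function is a row vector $v\in\mathcal{H}^{1\times n}$ with $v(\lambda_0)\ne0$ and $v(\lambda_0)T(\lambda_0)=0$, with multiplicity the order of the zero of $vT$ at $\lambda_0$; a left canonical matrix $V\in\mathcal{H}^{r\times n}$ is defined analogously. *)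

theory Defs
  imports "HOL-Complex_Analysis.Complex_Analysis"
    "Jordan_Normal_Form.Determinant" "Jordan_Normal_Form.Matrix_Kernel"
begin

text \<open>Meromorphic matrix functions are
  represented by their values off the poles; only their values in a punctured
  neighbourhood of lambda0 matter for the relation dot_eq.\<close>

definition hol_mat :: "complex set \<Rightarrow> nat \<Rightarrow> nat \<Rightarrow> (complex \<Rightarrow> complex mat) \<Rightarrow> bool" where
  "hol_mat S nr nc M \<longleftrightarrow>
     (\<forall>z\<in>S. M z \<in> carrier_mat nr nc) \<and>
     (\<forall>i<nr. \<forall>j<nc. (\<lambda>z. M z $$ (i,j)) holomorphic_on S)"

definition hol0_mat :: "complex \<Rightarrow> nat \<Rightarrow> nat \<Rightarrow> (complex \<Rightarrow> complex mat) \<Rightarrow> bool" where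
  "hol0_mat l0 nr nc M \<longleftrightarrow>
     (\<forall>\<^sub>F z in nhds l0. M z \<in> carrier_mat nr nc) \<and>
     (\<forall>i<nr. \<forall>j<nc. (\<lambda>z. M z $$ (i,j)) analytic_on {l0})"

definition unimodular0 :: "complex \<Rightarrow> nat \<Rightarrow> (complex \<Rightarrow> complex mat) \<Rightarrow> bool" where
  "unimodular0 l0 n U \<longleftrightarrow> hol0_mat l0 n n U \<and>
     (\<exists>W. hol0_mat l0 n n W \<and>
          (\<forall>\<^sub>F z in nhds l0. U z * W z = 1\<^sub>m n \<and> W z * U z = 1\<^sub>m n))"

text \<open>M1 \<doteq> M2: M2 - M1 is (after removing removable singularities) holomorphic in a
  neighbourhood of lambda0.\<close>
definition dot_eq :: "complex \<Rightarrow> nat \<Rightarrow> nat \<Rightarrow> (complex \<Rightarrow> complex mat) \<Rightarrow> (complex \<Rightarrow> complex mat) \<Rightarrow> bool" where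
  "dot_eq l0 nr nc M1 M2 \<longleftrightarrow>
     (\<exists>G. hol0_mat l0 nr nc G \<and> (\<forall>\<^sub>F z in at l0. M2 z - M1 z = G z))"

definition partial_mults :: "complex \<Rightarrow> nat \<Rightarrow> (complex \<Rightarrow> complex mat) \<Rightarrow> (nat \<Rightarrow> nat) \<Rightarrow> bool" where
  "partial_mults l0 n T m \<longleftrightarrow>
     (\<forall>i j. i \<le> j \<longrightarrow> j < n \<longrightarrow> m j \<le> m i) \<and>
     (\<exists>UL UR. unimodular0 l0 n UL \<and> unimodular0 l0 n UR \<and>
        (\<forall>\<^sub>F z in nhds l0. UL z * T z * UR z = mat_diag n (\<lambda>i. (z - l0) ^ m i)))"

definition vec_zero_order :: "complex \<Rightarrow> nat \<Rightarrow> (complex \<Rightarrow> complex vec) \<Rightarrow> nat \<Rightarrow> bool" where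
  "vec_zero_order l0 d f k \<longleftrightarrow>
     (\<exists>g. (\<forall>\<^sub>F z in nhds l0. g z \<in> carrier_vec d) \<and>
          (\<forall>i<d. (\<lambda>z. g z $ i) analytic_on {l0}) \<and>
          g l0 \<noteq> 0\<^sub>v d \<and>
          (\<forall>\<^sub>F z in nhds l0. f z = (z - l0) ^ k \<cdot>\<^sub>v g z))"

definition root_fun :: "complex set \<Rightarrow> complex \<Rightarrow> nat \<Rightarrow> (complex \<Rightarrow> complex mat) \<Rightarrow> (complex \<Rightarrow> complex vec) \<Rightarrow> bool" where
  "root_fun S l0 n T y \<longleftrightarrow>
     (\<forall>z\<in>S. y z \<in> carrier_vec n) \<and> (\<forall>i<n. (\<lambda>z. y z $ i) holomorphic_on S) \<and>
     y l0 \<noteq> 0\<^sub>v n \<and> T l0 *\<^sub>v y l0 = 0\<^sub>v n"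

definition root_mult :: "complex \<Rightarrow> nat \<Rightarrow> (complex \<Rightarrow> complex mat) \<Rightarrow> (complex \<Rightarrow> complex vec) \<Rightarrow> nat" where
  "root_mult l0 n T y = (THE k. vec_zero_order l0 n (\<lambda>z. T z *\<^sub>v y z) k)"

text \<open>Left root functions are row vectors v; v T is the row vector row 0 of (v as 1 x n matrix) * T.\<close>
definition left_root_fun :: "complex set \<Rightarrow> complex \<Rightarrow> nat \<Rightarrow> (complex \<Rightarrow> complex mat) \<Rightarrow> (complex \<Rightarrow> complex vec) \<Rightarrow> bool" where
  "left_root_fun S l0 n T v \<longleftrightarrow>
     (\<forall>z\<in>S. v z \<in> carrier_vec n) \<and> (\<forall>i<n. (\<lambda>z. v z $ i) holomorphic_on S) \<and>
     v l0 \<noteq> 0\<^sub>v n \<and> mat_of_row (v l0) * T l0 = 0\<^sub>m 1 n"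

definition left_root_mult :: "complex \<Rightarrow> nat \<Rightarrow> (complex \<Rightarrow> complex mat) \<Rightarrow> (complex \<Rightarrow> complex vec) \<Rightarrow> nat" where
  "left_root_mult l0 n T v = (THE k. vec_zero_order l0 n (\<lambda>z. row (mat_of_row (v z) * T z) 0) k)"

definition right_canonical :: "complex set \<Rightarrow> complex \<Rightarrow> nat \<Rightarrow> (complex \<Rightarrow> complex mat) \<Rightarrow> (nat \<Rightarrow> nat) \<Rightarrow> (complex \<Rightarrow> complex mat) \<Rightarrow> bool" where
  "right_canonical S l0 n T m Y \<longleftrightarrow>
     (let r = kernel_dim (T l0); nu = (\<lambda>j. root_mult l0 n T (\<lambda>z. col (Y z) j)) in
      hol_mat S n r Y \<and>
      (\<forall>j<r. root_fun S l0 n T (\<lambda>z. col (Y z) j)) \<and>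
      (\<forall>c\<in>carrier_vec r. Y l0 *\<^sub>v c = 0\<^sub>v n \<longrightarrow> c = 0\<^sub>v r) \<and>
      (\<Sum>j<r. nu j) = (\<Sum>i<r. m i) \<and>
      (\<forall>i j. i \<le> j \<longrightarrow> j < r \<longrightarrow> nu j \<le> nu i))"

definition left_canonical :: "complex set \<Rightarrow> complex \<Rightarrow> nat \<Rightarrow> (complex \<Rightarrow> complex mat) \<Rightarrow> (nat \<Rightarrow> nat) \<Rightarrow> (complex \<Rightarrow> complex mat) \<Rightarrow> bool" where
  "left_canonical S l0 n T m V \<longleftrightarrow>
     (let r = kernel_dim (T l0); nu = (\<lambda>i. left_root_mult l0 n T (\<lambda>z. row (V z) i)) in
      hol_mat S r n V \<and>
      (\<forall>i<r. left_root_fun S l0 n T (\<lambda>z. row (V z) i)) \<and>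
      (\<forall>c\<in>carrier_vec r. transpose_mat (V l0) *\<^sub>v c = 0\<^sub>v n \<longrightarrow> c = 0\<^sub>v r) \<and>
      (\<Sum>i<r. nu i) = (\<Sum>i<r. m i) \<and>
      (\<forall>i j. i \<le> j \<longrightarrow> j < r \<longrightarrow> nu j \<le> nu i))"

text \<open>Pointwise inverse of a square matrix (meaningful where it is invertible).\<close>
definition mat_inv :: "complex mat \<Rightarrow> complex mat" where
  "mat_inv A = (SOME B. B \<in> carrier_mat (dim_row A) (dim_row A) \<and> inverts_mat A B \<and> inverts_mat B A)"

end

theory Submission
  imports Defs
begin

text \<open>Near \<open>\<lambda>\<^sub>0\<close> write \<open>U\<^sub>L T U\<^sub>R = D = diag ((z - \<lambda>\<^sub>0) ^ m\<^sub>i)\<close> with inverses \<open>W\<^sub>L, W\<^sub>R\<close> of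
  \<open>U\<^sub>L, U\<^sub>R\<close>, and put \<open>X = W\<^sub>R Y\<close>, so that \<open>U\<^sub>L T Y = D X\<close>.  Writing \<open>T y\<^sub>j = (z - \<lambda>\<^sub>0) ^ \<nu>\<^sub>j g\<^sub>j\<close>, the
  entries satisfy \<open>(z - \<lambda>\<^sub>0) ^ m\<^sub>i X\<^sub>i\<^sub>j = (z - \<lambda>\<^sub>0) ^ \<nu>\<^sub>j N\<^sub>i\<^sub>j\<close> with \<open>N\<close> holomorphic; together with
  the injectivity of \<open>Y(\<lambda>\<^sub>0)\<close> and the equality of the sums of the \<open>\<nu>\<^sub>j\<close> and the \<open>m\<^sub>i\<close>, this
  forces \<open>\<nu> = m\<close>.  Hence \<open>T Y = G \<Delta>\<close>,
  \<open>D X = N \<Delta>\<close>, the leading \<open>r \<times> r\<close> blocks \<open>X\<^sub>1\<close> of \<open>X\<close> and \<open>M\<close> of \<open>N\<close> are invertible at \<open>\<lambda>\<^sub>0\<close>, and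
  \<open>L = X\<^sub>1\<^sup>-\<^sup>1 [I 0] W\<^sub>R\<close> is a holomorphic left inverse of \<open>Y\<close>.

  Everything follows from these factorizations: \<open>V\<^sub>0 = M\<^sup>-\<^sup>1 [I 0] U\<^sub>L\<close> satisfies
  \<open>T\<^sup>-\<^sup>1 \<doteq> Y \<Delta>\<^sup>-\<^sup>1 V\<^sub>0\<close> and \<open>V\<^sub>0 T = \<Delta> L\<close>, and a polynomial truncation of \<open>V\<^sub>0\<close> is a left canonical matrix;
  for any admissible \<open>V\<close>, \<open>\<Delta>\<^sup>-\<^sup>1 V \<doteq> L T\<^sup>-\<^sup>1\<close>, which gives uniqueness modulo \<open>\<Delta> H\<close>, and
  biorthogonality reduces to \<open>L T\<^sup>-\<^sup>1 G = \<Delta>\<^sup>-\<^sup>1\<close>.\<close>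

section \<open>Analytic functions at a point\<close>

lemma eventually_at_if_nhds: "\<forall>\<^sub>F z in nhds a. P z \<Longrightarrow> \<forall>\<^sub>F z in at a. P z"
  by (simp add: eventually_nhds_conv_at)

lemma analytic_at_transfer:
  "\<forall>\<^sub>F z in nhds a. f z = g z \<Longrightarrow> f analytic_on {a} \<Longrightarrow> g analytic_on {a}"
  using analytic_at_cong by blast

lemma analytic_at_eventually_eq_nhds:
  fixes f g :: "complex \<Rightarrow> complex"
  assumes "f analytic_on {a}" "g analytic_on {a}" "\<forall>\<^sub>F z in at a. f z = g z"
  shows "\<forall>\<^sub>F z in nhds a. f z = g z"
proof -
  have f: "(f \<longlongrightarrow> f a) (at a)" and g: "(g \<longlongrightarrow> g a) (at a)"
    using assms(1,2) analytic_at_imp_isCont isContD by blast+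
  have "(f \<longlongrightarrow> g a) (at a)"
    using Lim_transform_eventually[OF g] assms(3) by (simp add: eventually_mono)
  hence "f a = g a" using tendsto_unique[OF _ f] by auto
  thus ?thesis using assms(3) by (simp add: eventually_nhds_conv_at)
qed

lemma analytic_at_factor_linear:
  fixes f :: "complex \<Rightarrow> complex"
  assumes "f analytic_on {a}"
  obtains h where "h analytic_on {a}" "\<And>z. f z = f a + (z - a) * h z"
proof -
  obtain e where e: "e > 0" "f holomorphic_on ball a e" using assms analytic_at_ball by blast
  define h where "h = (\<lambda>z. if z = a then deriv f a else (f z - f a) / (z - a))"
  have "h holomorphic_on ball a e" unfolding h_def
    by (rule pole_lemma[OF e(2)]) (simp add: e(1))
  hence "h analytic_on {a}" using e(1) holomorphic_on_imp_analytic_at by auto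
  moreover have "\<And>z. f z = f a + (z - a) * h z" by (auto simp: h_def)
  ultimately show ?thesis using that by blast
qed

lemma analytic_at_cancel_power:
  fixes f h :: "complex \<Rightarrow> complex"
  assumes "f analytic_on {a}" "h analytic_on {a}"
    and "\<forall>\<^sub>F z in at a. (z - a) ^ i * f z = (z - a) ^ j * h z" and "i \<le> j"
  shows "\<forall>\<^sub>F z in nhds a. f z = (z - a) ^ (j - i) * h z"
proof (rule analytic_at_eventually_eq_nhds[OF assms(1)])
  show "(\<lambda>z. (z - a) ^ (j - i) * h z) analytic_on {a}"
    by (auto intro!: analytic_intros assms(2))
  have "\<forall>\<^sub>F z in at a. z \<noteq> a" by (simp add: eventually_at_filter)
  thus "\<forall>\<^sub>F z in at a. f z = (z - a) ^ (j - i) * h z"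
    using assms(3)
  proof eventually_elim
    case (elim z)
    have "(z - a) ^ j = (z - a) ^ i * (z - a) ^ (j - i)"
      using assms(4) by (metis le_add_diff_inverse power_add)
    with elim show ?case by simp
  qed
qed

lemma analytic_at_cancel_power_eq_0:
  fixes f h :: "complex \<Rightarrow> complex"
  assumes "f analytic_on {a}" "h analytic_on {a}"
    and "\<forall>\<^sub>F z in at a. (z - a) ^ i * f z = (z - a) ^ j * h z" and "i < j"
  shows "f a = 0"
  using eventually_nhds_x_imp_x[OF analytic_at_cancel_power[OF assms(1-3)]] assms(4) by simp

lemma analytic_at_polynomial_approx:
  fixes f :: "complex \<Rightarrow> complex"
  assumes "f analytic_on {a}"
  shows "\<exists>P h. P holomorphic_on UNIV \<and> h analytic_on {a} \<and>
           (\<forall>\<^sub>F z in nhds a. f z = P z + (z - a) ^ N * h z)"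
proof (induction N)
  case 0
  show ?case by (rule exI[of _ "\<lambda>_. 0"], rule exI[of _ f]) (auto simp: assms)
next
  case (Suc N)
  then obtain P h where P: "P holomorphic_on UNIV" "h analytic_on {a}"
    "\<forall>\<^sub>F z in nhds a. f z = P z + (z - a) ^ N * h z" by blast
  obtain h1 where h1: "h1 analytic_on {a}" "\<And>z. h z = h a + (z - a) * h1 z"
    using analytic_at_factor_linear[OF P(2)] by blast
  have "(\<lambda>z. P z + h a * (z - a) ^ N) holomorphic_on UNIV" by (intro holomorphic_intros P(1))
  moreover have "\<forall>\<^sub>F z in nhds a. f z = (P z + h a * (z - a) ^ N) + (z - a) ^ Suc N * h1 z"
    using P(3) by eventually_elim (subst (asm) h1(2), simp add: algebra_simps)
  ultimately show ?case using h1(1) by blast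
qed

section \<open>Orders of zeros of vector functions\<close>

definition vec_power_divides :: "complex \<Rightarrow> nat \<Rightarrow> nat \<Rightarrow> (complex \<Rightarrow> complex vec) \<Rightarrow> bool" where
  "vec_power_divides a d k f \<longleftrightarrow>
     (\<exists>g. (\<forall>\<^sub>F z in nhds a. g z \<in> carrier_vec d) \<and> (\<forall>i<d. (\<lambda>z. g z $ i) analytic_on {a}) \<and>
          (\<forall>\<^sub>F z in nhds a. f z = (z - a) ^ k \<cdot>\<^sub>v g z))"

lemma vec_zero_order_unique:
  assumes "vec_zero_order a d f k" "vec_zero_order a d f k'"
  shows "k = k'"
proof -
  have less_impossible: False
    if zo: "vec_zero_order a d f k" "vec_zero_order a d f k'" and "k < k'" for k k'
  proof -
    obtain g :: "complex \<Rightarrow> complex vec" where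
      g: "\<forall>\<^sub>F z in nhds a. g z \<in> carrier_vec d" "\<forall>i<d. (\<lambda>z. g z $ i) analytic_on {a}"
      "g a \<noteq> 0\<^sub>v d" "\<forall>\<^sub>F z in nhds a. f z = (z - a) ^ k \<cdot>\<^sub>v g z"
      using zo(1) unfolding vec_zero_order_def by blast
    obtain g' :: "complex \<Rightarrow> complex vec" where
      g': "\<forall>\<^sub>F z in nhds a. g' z \<in> carrier_vec d" "\<forall>i<d. (\<lambda>z. g' z $ i) analytic_on {a}"
      "\<forall>\<^sub>F z in nhds a. f z = (z - a) ^ k' \<cdot>\<^sub>v g' z"
      using zo(2) unfolding vec_zero_order_def by blast
    have "g a $ i = 0" if i: "i < d" for i
    proof (rule analytic_at_cancel_power_eq_0[OF g(2)[rule_format, OF i] g'(2)[rule_format, OF i] _ \<open>k < k'\<close>])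
      show "\<forall>\<^sub>F z in at a. (z - a) ^ k * g z $ i = (z - a) ^ k' * g' z $ i"
        using eventually_at_if_nhds[OF g(1)] eventually_at_if_nhds[OF g(4)]
          eventually_at_if_nhds[OF g'(1)] eventually_at_if_nhds[OF g'(3)]
      proof eventually_elim
        case (elim z)
        hence "((z - a) ^ k \<cdot>\<^sub>v g z) $ i = ((z - a) ^ k' \<cdot>\<^sub>v g' z) $ i" by metis
        thus ?case using elim i by simp
      qed
    qed
    hence "g a = 0\<^sub>v d" using eventually_nhds_x_imp_x[OF g(1)] by (intro eq_vecI) auto
    thus False using g(3) by simp
  qed
  show ?thesis using less_impossible assms by (metis linorder_neqE_nat)
qed

lemma the_vec_zero_order: "vec_zero_order a d f k \<Longrightarrow> (THE k. vec_zero_order a d f k) = k"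
  using vec_zero_order_unique by blast

lemma vec_zero_order_eq_0_iff:
  assumes "vec_zero_order a d f k"
  shows "f a = 0\<^sub>v d \<longleftrightarrow> 0 < k"
proof -
  obtain g :: "complex \<Rightarrow> complex vec" where
    g: "\<forall>\<^sub>F z in nhds a. g z \<in> carrier_vec d" "g a \<noteq> 0\<^sub>v d" "\<forall>\<^sub>F z in nhds a. f z = (z - a) ^ k \<cdot>\<^sub>v g z"
    using assms unfolding vec_zero_order_def by blast
  note g = eventually_nhds_x_imp_x[OF g(1)] g(2) eventually_nhds_x_imp_x[OF g(3)]
  show ?thesis
  proof (cases k)
    case 0 thus ?thesis using g by simp
  next
    case (Suc k') thus ?thesis using g by (auto intro!: eq_vecI)
  qed
qed

lemma vec_zero_order_exists:
  assumes "vec_power_divides a d 0 f" and bound: "\<And>k. vec_power_divides a d k f \<Longrightarrow> k \<le> K"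
  shows "\<exists>k. vec_zero_order a d f k"
proof -
  define k where "k = (GREATEST k. vec_power_divides a d k f)"
  have "vec_power_divides a d k f"
    unfolding k_def by (rule GreatestI_nat[of "\<lambda>k. vec_power_divides a d k f", OF assms(1) bound])
  then obtain g :: "complex \<Rightarrow> complex vec" where g: "\<forall>\<^sub>F z in nhds a. g z \<in> carrier_vec d" "\<forall>i<d. (\<lambda>z. g z $ i) analytic_on {a}"
    "\<forall>\<^sub>F z in nhds a. f z = (z - a) ^ k \<cdot>\<^sub>v g z" unfolding vec_power_divides_def by blast
  have "g a \<noteq> 0\<^sub>v d"
  proof
    assume g0: "g a = 0\<^sub>v d"
    have "\<forall>i<d. \<exists>h. h analytic_on {a} \<and> (\<forall>z. g z $ i = (z - a) * h z)"
    proof (intro allI impI)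
      fix i assume i: "i < d"
      obtain h where "h analytic_on {a}" "\<And>z. g z $ i = g a $ i + (z - a) * h z"
        using analytic_at_factor_linear[OF g(2)[rule_format, OF i]] by blast
      thus "\<exists>h. h analytic_on {a} \<and> (\<forall>z. g z $ i = (z - a) * h z)" using g0 i by auto
    qed
    then obtain h where h: "\<forall>i<d. h i analytic_on {a} \<and> (\<forall>z. g z $ i = (z - a) * h i z)"
      unfolding choice_iff' by blast
    have "vec_power_divides a d (Suc k) f" unfolding vec_power_divides_def
    proof (intro exI conjI allI impI)
      show "\<forall>\<^sub>F z in nhds a. vec d (\<lambda>i. h i z) \<in> carrier_vec d" by simp
      show "\<forall>\<^sub>F z in nhds a. f z = (z - a) ^ Suc k \<cdot>\<^sub>v vec d (\<lambda>i. h i z)"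
        using g(1) g(3) by eventually_elim (rule eq_vecI, use h in auto)
      fix i assume "i < d"
      thus "(\<lambda>z. vec d (\<lambda>i. h i z) $ i) analytic_on {a}" using h by simp
    qed
    thus False using Greatest_le_nat[OF _ bound, of "\<lambda>k. vec_power_divides a d k f"]
      unfolding k_def[symmetric] by fastforce
  qed
  thus ?thesis using g unfolding vec_zero_order_def by blast
qed

section \<open>Matrix functions holomorphic at a point\<close>

lemma hol0_matI:
  assumes "\<forall>\<^sub>F z in nhds a. M z \<in> carrier_mat nr nc"
    and "\<And>i j. i < nr \<Longrightarrow> j < nc \<Longrightarrow> (\<lambda>z. M z $$ (i,j)) analytic_on {a}"
  shows "hol0_mat a nr nc M"
  using assms unfolding hol0_mat_def by auto

lemma hol0_matD:
  assumes "hol0_mat a nr nc M"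
  shows "\<forall>\<^sub>F z in nhds a. M z \<in> carrier_mat nr nc"
    and "\<And>i j. i < nr \<Longrightarrow> j < nc \<Longrightarrow> (\<lambda>z. M z $$ (i,j)) analytic_on {a}"
  using assms unfolding hol0_mat_def by auto

lemma hol0_mat_carrier: "hol0_mat a nr nc M \<Longrightarrow> M a \<in> carrier_mat nr nc"
  using eventually_nhds_x_imp_x[OF hol0_matD(1)] .

lemma hol_mat_imp_hol0_mat:
  assumes "open S" "a \<in> S" "hol_mat S nr nc M"
  shows "hol0_mat a nr nc M"
proof (rule hol0_matI)
  show "\<forall>\<^sub>F z in nhds a. M z \<in> carrier_mat nr nc"
    using assms eventually_nhds_in_open[OF assms(1,2)] unfolding hol_mat_def
    by (auto elim: eventually_mono)
  fix i j assume "i < nr" "j < nc"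
  thus "(\<lambda>z. M z $$ (i, j)) analytic_on {a}"
    using assms holomorphic_on_imp_analytic_at[OF _ assms(1,2)] unfolding hol_mat_def by auto
qed

lemma hol0_mat_mat:
  assumes "\<And>i j. i < nr \<Longrightarrow> j < nc \<Longrightarrow> f i j analytic_on {a}"
  shows "hol0_mat a nr nc (\<lambda>z. mat nr nc (\<lambda>(i,j). f i j z))"
  by (rule hol0_matI) (auto simp: assms)

lemma hol0_mat_const: "C \<in> carrier_mat nr nc \<Longrightarrow> hol0_mat a nr nc (\<lambda>z. C)"
  by (rule hol0_matI) auto

lemma hol0_mat_diag:
  assumes "\<And>i. i < n \<Longrightarrow> f i analytic_on {a}"
  shows "hol0_mat a n n (\<lambda>z. mat_diag n (\<lambda>i. f i z))"
proof (rule hol0_matI)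
  fix i j assume "i < n" "j < n"
  thus "(\<lambda>z. mat_diag n (\<lambda>i. f i z) $$ (i, j)) analytic_on {a}"
    by (cases "i = j") (auto simp: mat_diag_def assms)
qed auto

lemma hol0_mat_mult:
  assumes A: "hol0_mat a nr k A" and B: "hol0_mat a k nc B"
  shows "hol0_mat a nr nc (\<lambda>z. A z * B z)"
proof (rule hol0_matI)
  show "\<forall>\<^sub>F z in nhds a. A z * B z \<in> carrier_mat nr nc"
    using hol0_matD(1)[OF A] hol0_matD(1)[OF B] by eventually_elim auto
  fix i j assume ij: "i < nr" "j < nc"
  have "\<forall>\<^sub>F z in nhds a. (\<Sum>l<k. A z $$ (i,l) * B z $$ (l,j)) = (A z * B z) $$ (i,j)"
    using hol0_matD(1)[OF A] hol0_matD(1)[OF B]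
    by eventually_elim (use ij in \<open>auto simp: scalar_prod_def intro!: sum.cong\<close>)
  moreover have "(\<lambda>z. \<Sum>l<k. A z $$ (i,l) * B z $$ (l,j)) analytic_on {a}"
    using hol0_matD(2)[OF A] hol0_matD(2)[OF B] ij by (auto intro!: analytic_intros)
  ultimately show "(\<lambda>z. (A z * B z) $$ (i,j)) analytic_on {a}" by (rule analytic_at_transfer)
qed

lemma hol0_mat_add:
  assumes A: "hol0_mat a nr nc A" and B: "hol0_mat a nr nc B"
  shows "hol0_mat a nr nc (\<lambda>z. A z + B z)"
proof (rule hol0_matI)
  show "\<forall>\<^sub>F z in nhds a. A z + B z \<in> carrier_mat nr nc"
    using hol0_matD(1)[OF A] hol0_matD(1)[OF B] by eventually_elim auto
  fix i j assume ij: "i < nr" "j < nc"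
  have "\<forall>\<^sub>F z in nhds a. A z $$ (i,j) + B z $$ (i,j) = (A z + B z) $$ (i,j)"
    using hol0_matD(1)[OF A] hol0_matD(1)[OF B] by eventually_elim (use ij in auto)
  moreover have "(\<lambda>z. A z $$ (i,j) + B z $$ (i,j)) analytic_on {a}"
    using hol0_matD(2)[OF A] hol0_matD(2)[OF B] ij by (auto intro!: analytic_intros)
  ultimately show "(\<lambda>z. (A z + B z) $$ (i,j)) analytic_on {a}" by (rule analytic_at_transfer)
qed

lemma hol0_mat_minus:
  assumes A: "hol0_mat a nr nc A" and B: "hol0_mat a nr nc B"
  shows "hol0_mat a nr nc (\<lambda>z. A z - B z)"
proof (rule hol0_matI)
  show "\<forall>\<^sub>F z in nhds a. A z - B z \<in> carrier_mat nr nc"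
    using hol0_matD(1)[OF A] hol0_matD(1)[OF B] by eventually_elim auto
  fix i j assume ij: "i < nr" "j < nc"
  have "\<forall>\<^sub>F z in nhds a. A z $$ (i,j) - B z $$ (i,j) = (A z - B z) $$ (i,j)"
    using hol0_matD(1)[OF A] hol0_matD(1)[OF B] by eventually_elim (use ij in auto)
  moreover have "(\<lambda>z. A z $$ (i,j) - B z $$ (i,j)) analytic_on {a}"
    using hol0_matD(2)[OF A] hol0_matD(2)[OF B] ij by (auto intro!: analytic_intros)
  ultimately show "(\<lambda>z. (A z - B z) $$ (i,j)) analytic_on {a}" by (rule analytic_at_transfer)
qed

lemma analytic_at_det:
  assumes A: "hol0_mat a n n A"
  shows "(\<lambda>z. det (A z)) analytic_on {a}"
proof -
  let ?leibniz = "\<lambda>z. \<Sum>p \<in> {p. p permutes {0..<n}}. signof p * (\<Prod>i = 0..<n. A z $$ (i, p i))"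
  have "\<forall>\<^sub>F z in nhds a. ?leibniz z = det (A z)"
    using hol0_matD(1)[OF A] by eventually_elim (auto simp: det_def')
  moreover have "?leibniz analytic_on {a}"
  proof (intro analytic_intros)
    fix p i assume "p \<in> {p. p permutes {0..<n}}" "i \<in> {0..<n}"
    thus "(\<lambda>z. A z $$ (i, p i)) analytic_on {a}"
      using hol0_matD(2)[OF A] by (auto simp: permutes_in_image)
  qed
  ultimately show ?thesis by (rule analytic_at_transfer)
qed

lemma hol0_mat_delete:
  assumes A: "hol0_mat a n n A"
  shows "hol0_mat a (n - 1) (n - 1) (\<lambda>z. mat_delete (A z) i j)"
proof (rule hol0_matI)
  show "\<forall>\<^sub>F z in nhds a. mat_delete (A z) i j \<in> carrier_mat (n - 1) (n - 1)"
    using hol0_matD(1)[OF A] by eventually_elim (auto intro: mat_delete_carrier)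
  fix i' j' assume ij: "i' < n - 1" "j' < n - 1"
  let ?i = "if i' < i then i' else Suc i'" and ?j = "if j' < j then j' else Suc j'"
  have "\<forall>\<^sub>F z in nhds a. A z $$ (?i, ?j) = mat_delete (A z) i j $$ (i',j')"
    using hol0_matD(1)[OF A] by eventually_elim (use ij in \<open>auto simp: mat_delete_def\<close>)
  moreover have "(\<lambda>z. A z $$ (?i, ?j)) analytic_on {a}" using hol0_matD(2)[OF A] ij by auto
  ultimately show "(\<lambda>z. mat_delete (A z) i j $$ (i',j')) analytic_on {a}"
    by (rule analytic_at_transfer)
qed

text \<open>The inverse is the adjugate divided by the determinant, which stays away from zero near \<open>a\<close>.\<close>

lemma hol0_mat_inverse:
  assumes A: "hol0_mat a n n A" and det: "det (A a) \<noteq> 0"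
  obtains B where "hol0_mat a n n B" "\<forall>\<^sub>F z in nhds a. A z * B z = 1\<^sub>m n \<and> B z * A z = 1\<^sub>m n"
proof -
  define B where "B = (\<lambda>z. (1 / det (A z)) \<cdot>\<^sub>m adj_mat (A z))"
  have det_analytic: "(\<lambda>z. det (A z)) analytic_on {a}" by (rule analytic_at_det[OF A])
  have det_nz: "\<forall>\<^sub>F z in nhds a. det (A z) \<noteq> 0"
    using analytic_at_neq_imp_eventually_neq[OF det_analytic det] det
    by (simp add: eventually_nhds_conv_at)
  have "hol0_mat a n n B"
  proof (rule hol0_matI)
    show "\<forall>\<^sub>F z in nhds a. B z \<in> carrier_mat n n"
      using hol0_matD(1)[OF A] by eventually_elim (auto simp: B_def adj_mat)
    fix i j assume ij: "i < n" "j < n"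
    have "\<forall>\<^sub>F z in nhds a.
        (1 / det (A z)) * ((-1) ^ (j + i) * det (mat_delete (A z) j i)) = B z $$ (i,j)"
      using hol0_matD(1)[OF A]
      by eventually_elim (use ij in \<open>auto simp: B_def adj_mat_def cofactor_def\<close>)
    moreover have "(\<lambda>z. (1 / det (A z)) * ((-1) ^ (j + i) * det (mat_delete (A z) j i))) analytic_on {a}"
      by (intro analytic_intros det_analytic analytic_at_det[OF hol0_mat_delete[OF A]])
        (use det in auto)
    ultimately show "(\<lambda>z. B z $$ (i,j)) analytic_on {a}" by (rule analytic_at_transfer)
  qed
  moreover have "\<forall>\<^sub>F z in nhds a. A z * B z = 1\<^sub>m n \<and> B z * A z = 1\<^sub>m n"
    using hol0_matD(1)[OF A] det_nz
  proof eventually_elim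
    case (elim z)
    note adj = adj_mat[OF elim(1)]
    have "A z * B z = (1 / det (A z)) \<cdot>\<^sub>m (A z * adj_mat (A z))"
      unfolding B_def by (rule mult_smult_distrib[OF elim(1) adj(1)])
    also have "\<dots> = 1\<^sub>m n" unfolding adj(2) using elim(2) by (intro eq_matI) auto
    moreover have "B z * A z = (1 / det (A z)) \<cdot>\<^sub>m (adj_mat (A z) * A z)"
      unfolding B_def by (rule mult_smult_assoc_mat[OF adj(1) elim(1)])
    moreover have "\<dots> = 1\<^sub>m n" unfolding adj(3) using elim(2) by (intro eq_matI) auto
    ultimately show ?case by simp
  qed
  ultimately show ?thesis using that by blast
qed

lemma hol0_mat_polynomial_approx:
  assumes V: "hol0_mat a nr nc V"
  obtains P H where "hol_mat UNIV nr nc P" "hol0_mat a nr nc H"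
    "\<forall>\<^sub>F z in nhds a. P z = V z + (z - a) ^ N \<cdot>\<^sub>m H z"
proof -
  have "\<forall>ij\<in>{..<nr} \<times> {..<nc}. \<exists>Ph. fst Ph holomorphic_on UNIV \<and> snd Ph analytic_on {a} \<and>
          (\<forall>\<^sub>F z in nhds a. V z $$ ij = fst Ph z + (z - a) ^ N * snd Ph z)"
    using analytic_at_polynomial_approx[OF hol0_matD(2)[OF V]] by fastforce
  then obtain Ph where Ph: "\<And>i j. i < nr \<Longrightarrow> j < nc \<Longrightarrow>
      fst (Ph (i,j)) holomorphic_on UNIV \<and> snd (Ph (i,j)) analytic_on {a} \<and>
      (\<forall>\<^sub>F z in nhds a. V z $$ (i,j) = fst (Ph (i,j)) z + (z - a) ^ N * snd (Ph (i,j)) z)"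
    unfolding bchoice_iff by auto
  define P where "P = (\<lambda>z. mat nr nc (\<lambda>ij. fst (Ph ij) z))"
  define H where "H = (\<lambda>z. mat nr nc (\<lambda>ij. - snd (Ph ij) z))"
  have "hol_mat UNIV nr nc P" using Ph by (auto simp: hol_mat_def P_def)
  moreover have "hol0_mat a nr nc H"
    unfolding H_def by (rule hol0_matI) (auto intro!: analytic_intros simp: Ph)
  moreover have "\<forall>\<^sub>F z in nhds a. P z = V z + (z - a) ^ N \<cdot>\<^sub>m H z"
  proof -
    have "\<forall>\<^sub>F z in nhds a. \<forall>ij\<in>{..<nr} \<times> {..<nc}.
        V z $$ ij = fst (Ph ij) z + (z - a) ^ N * snd (Ph ij) z"
      by (rule eventually_ball_finite) (use Ph in auto)
    thus ?thesis using hol0_matD(1)[OF V]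
      by eventually_elim (rule eq_matI, auto simp: P_def H_def)
  qed
  ultimately show ?thesis using that by blast
qed

definition inverse_near :: "complex \<Rightarrow> nat \<Rightarrow> (complex \<Rightarrow> complex mat) \<Rightarrow> complex \<Rightarrow> complex mat" where
  "inverse_near a n A = (SOME B. hol0_mat a n n B \<and> (\<forall>\<^sub>F z in nhds a. A z * B z = 1\<^sub>m n \<and> B z * A z = 1\<^sub>m n))"

lemma inverse_near:
  assumes "hol0_mat a n n A" "det (A a) \<noteq> 0"
  shows "hol0_mat a n n (inverse_near a n A)"
    and "\<forall>\<^sub>F z in nhds a. A z * inverse_near a n A z = 1\<^sub>m n \<and> inverse_near a n A z * A z = 1\<^sub>m n"
proof -
  obtain B where "hol0_mat a n n B" "\<forall>\<^sub>F z in nhds a. A z * B z = 1\<^sub>m n \<and> B z * A z = 1\<^sub>m n"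
    by (rule hol0_mat_inverse[OF assms])
  hence "\<exists>B. hol0_mat a n n B \<and> (\<forall>\<^sub>F z in nhds a. A z * B z = 1\<^sub>m n \<and> B z * A z = 1\<^sub>m n)" by blast
  from someI_ex[OF this, folded inverse_near_def]
  show "hol0_mat a n n (inverse_near a n A)"
    "\<forall>\<^sub>F z in nhds a. A z * inverse_near a n A z = 1\<^sub>m n \<and> inverse_near a n A z * A z = 1\<^sub>m n"
    by blast+
qed

lemma hol_mat_subset: "hol_mat S nr nc M \<Longrightarrow> S' \<subseteq> S \<Longrightarrow> hol_mat S' nr nc M"
  unfolding hol_mat_def using holomorphic_on_subset by blast

lemma hol_mat_minus:
  assumes A: "hol_mat S nr nc A" and B: "hol_mat S nr nc B"
  shows "hol_mat S nr nc (\<lambda>z. A z - B z)"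
  unfolding hol_mat_def
proof (intro conjI ballI allI impI)
  fix z assume "z \<in> S"
  thus "A z - B z \<in> carrier_mat nr nc" using B by (auto simp: hol_mat_def minus_carrier_mat)
next
  fix i j assume ij: "i < nr" "j < nc"
  have "(\<lambda>z. A z $$ (i,j) - B z $$ (i,j)) holomorphic_on S"
    using A B ij by (auto simp: hol_mat_def intro!: holomorphic_intros)
  thus "(\<lambda>z. (A z - B z) $$ (i,j)) holomorphic_on S"
    by (rule holomorphic_transform) (use A B ij in \<open>auto simp: hol_mat_def\<close>)
qed

lemma eventually_entry_eq_mat_diag_power_mult:
  assumes W: "hol0_mat a nr nc W" and K: "hol0_mat a nr nc K"
    and eq: "\<forall>\<^sub>F z in at a. W z = mat_diag nr (\<lambda>i. (z - a) ^ m i) * K z" and ij: "i < nr" "j < nc"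
  shows "\<forall>\<^sub>F z in nhds a. W z $$ (i,j) = (z - a) ^ m i * K z $$ (i,j)"
proof (rule analytic_at_eventually_eq_nhds)
  show "(\<lambda>z. W z $$ (i,j)) analytic_on {a}" by (rule hol0_matD(2)[OF W ij])
  show "(\<lambda>z. (z - a) ^ m i * K z $$ (i,j)) analytic_on {a}"
    using hol0_matD(2)[OF K ij] by (auto intro!: analytic_intros)
  show "\<forall>\<^sub>F z in at a. W z $$ (i,j) = (z - a) ^ m i * K z $$ (i,j)"
    using eq eventually_at_if_nhds[OF hol0_matD(1)[OF K]]
    by eventually_elim (use ij in \<open>simp add: mat_diag_mult_left\<close>)
qed

text \<open>The quotient of \<open>W\<close> by \<open>diag ((z - a) ^ m i)\<close> has only a removable singularity at \<open>a\<close>.\<close>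

lemma hol_mat_eq_mat_diag_power_mult:
  assumes S: "open S" "a \<in> S" and W: "hol_mat S nr nc W" and K: "hol0_mat a nr nc K"
    and eq: "\<forall>\<^sub>F z in at a. W z = mat_diag nr (\<lambda>i. (z - a) ^ m i) * K z"
  obtains H where "hol_mat S nr nc H" "\<forall>z\<in>S. W z = mat_diag nr (\<lambda>i. (z - a) ^ m i) * H z"
proof -
  note div = eventually_entry_eq_mat_diag_power_mult[OF hol_mat_imp_hol0_mat[OF S W] K eq]
  define H where "H = (\<lambda>z. mat nr nc (\<lambda>(i,j).
    if z = a then K a $$ (i,j) else W z $$ (i,j) / (z - a) ^ m i))"
  have "(\<lambda>z. H z $$ (i,j)) analytic_on {z0}" if ij: "i < nr" "j < nc" and z0: "z0 \<in> S" for i j z0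
  proof (cases "z0 = a")
    case True
    have "\<forall>\<^sub>F z in nhds a. K z $$ (i,j) = H z $$ (i,j)"
      using div[OF ij] by eventually_elim (use ij in \<open>auto simp: H_def\<close>)
    from analytic_at_transfer[OF this hol0_matD(2)[OF K ij]] show ?thesis using True by simp
  next
    case False
    have "\<forall>\<^sub>F z in nhds z0. z \<noteq> a" using eventually_nhds_in_open[of "- {a}" z0] False by auto
    hence "\<forall>\<^sub>F z in nhds z0. W z $$ (i,j) / (z - a) ^ m i = H z $$ (i,j)"
      by eventually_elim (use ij in \<open>auto simp: H_def\<close>)
    moreover have "(\<lambda>z. W z $$ (i,j) / (z - a) ^ m i) analytic_on {z0}"
      using W ij holomorphic_on_imp_analytic_at[OF _ S(1) z0] False
      by (auto simp: hol_mat_def intro!: analytic_intros)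
    ultimately show ?thesis by (rule analytic_at_transfer)
  qed
  hence "(\<lambda>z. H z $$ (i,j)) holomorphic_on S" if "i < nr" "j < nc" for i j
    using that S(1) by (simp add: analytic_on_open[symmetric] analytic_on_analytic_at[of _ S])
  hence "hol_mat S nr nc H" by (simp add: hol_mat_def H_def)
  moreover have "W z = mat_diag nr (\<lambda>i. (z - a) ^ m i) * H z" if z: "z \<in> S" for z
  proof -
    have "W z $$ (i,j) = (z - a) ^ m i * H z $$ (i,j)" if ij: "i < nr" "j < nc" for i j
      using eventually_nhds_x_imp_x[OF div[OF ij]] ij by (cases "z = a") (auto simp: H_def)
    moreover have "W z \<in> carrier_mat nr nc" using W z by (simp add: hol_mat_def)
    moreover have "H z \<in> carrier_mat nr nc" by (simp add: H_def)
    ultimately show ?thesis by (auto simp: mat_diag_mult_left intro!: eq_matI)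
  qed
  ultimately show ?thesis using that by blast
qed

section \<open>Matrix algebra\<close>

lemma mat_diag_cong: "(\<And>i. i < n \<Longrightarrow> f i = g i) \<Longrightarrow> mat_diag n f = mat_diag n g"
  unfolding mat_diag_def by (intro eq_matI) auto

lemma mult_cancel_right_inverse:
  fixes A :: "'a :: semiring_1 mat"
  shows "A \<in> carrier_mat n k \<Longrightarrow> B \<in> carrier_mat k n \<Longrightarrow> C \<in> carrier_mat n j \<Longrightarrow>
    A * B = 1\<^sub>m n \<Longrightarrow> A * (B * C) = C"
  by (metis assoc_mult_mat left_mult_one_mat)

lemma mat_inv_unique:
  assumes "A \<in> carrier_mat n n" "B \<in> carrier_mat n n" "A * B = 1\<^sub>m n" "B * A = 1\<^sub>m n"
  shows "mat_inv A = B"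
proof -
  let ?P = "\<lambda>B. B \<in> carrier_mat (dim_row A) (dim_row A) \<and> inverts_mat A B \<and> inverts_mat B A"
  have "?P B" using assms by (auto simp: inverts_mat_def)
  hence "?P (mat_inv A)" unfolding mat_inv_def by (rule someI)
  hence C: "mat_inv A \<in> carrier_mat n n" "mat_inv A * A = 1\<^sub>m n"
    using assms by (auto simp: inverts_mat_def)
  have "mat_inv A = mat_inv A * (A * B)" using C assms(3) by simp
  also have "\<dots> = (mat_inv A * A) * B" using C(1) assms(1,2) by (simp add: assoc_mult_mat)
  also have "\<dots> = B" using C(2) assms(2) by simp
  finally show ?thesis .
qed

lemma det_zero_row:
  assumes A: "A \<in> carrier_mat n n" and k: "k < n" and zero: "\<And>j. j < n \<Longrightarrow> A $$ (k,j) = 0"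
  shows "det A = 0"
proof -
  have "(\<Prod>i = 0..<n. A $$ (i, p i)) = 0" if "p permutes {0..<n}" for p
    using k zero[of "p k"] permutes_in_image[OF that, of k] by (intro prod_zero) auto
  thus ?thesis unfolding det_def'[OF A] by simp
qed

lemma mat_kernel_nonzero_if_block_singular:
  fixes A :: "'a :: idom mat"
  assumes A: "A \<in> carrier_mat n r" and k: "k \<le> r"
    and low: "\<And>i j. k \<le> i \<Longrightarrow> i < n \<Longrightarrow> j < k \<Longrightarrow> A $$ (i,j) = 0"
    and singular: "det (mat k k (\<lambda>(i,j). A $$ (i,j))) = 0"
  obtains c where "c \<in> carrier_vec r" "c \<noteq> 0\<^sub>v r" "A *\<^sub>v c = 0\<^sub>v n"
proof -
  let ?B = "mat k k (\<lambda>(i,j). A $$ (i,j))"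
  obtain v where v: "v \<in> carrier_vec k" "v \<noteq> 0\<^sub>v k" "?B *\<^sub>v v = 0\<^sub>v k"
    using singular det_0_iff_vec_prod_zero[of ?B k] by auto
  define c where "c = vec r (\<lambda>j. if j < k then v $ j else 0)"
  have Ac: "(A *\<^sub>v c) $ i = (\<Sum>j = 0..<k. A $$ (i,j) * v $ j)" if i: "i < n" for i
  proof -
    have "(A *\<^sub>v c) $ i = (\<Sum>j = 0..<r. A $$ (i,j) * (if j < k then v $ j else 0))"
      using A i by (auto simp: scalar_prod_def c_def intro!: sum.cong)
    also have "\<dots> = (\<Sum>j = 0..<k. A $$ (i,j) * v $ j)"
      by (rule sum.mono_neutral_cong_right) (use k in auto)
    finally show ?thesis .
  qed
  have "A *\<^sub>v c = 0\<^sub>v n"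
  proof (rule eq_vecI)
    fix i assume "i < dim_vec (0\<^sub>v n)"
    hence i: "i < n" by simp
    show "(A *\<^sub>v c) $ i = 0\<^sub>v n $ i"
    proof (cases "i < k")
      case True
      have "(A *\<^sub>v c) $ i = (?B *\<^sub>v v) $ i"
        using Ac[OF i] True v(1) by (auto simp: scalar_prod_def intro!: sum.cong)
      also have "\<dots> = 0" unfolding v(3) using True by simp
      finally show ?thesis using i by simp
    qed (use Ac[OF i] low i in simp)
  qed (use A in simp)
  moreover have "c \<noteq> 0\<^sub>v r"
  proof
    assume c0: "c = 0\<^sub>v r"
    have "v $ j = 0" if "j < k" for j
    proof -
      have "v $ j = c $ j" using that k by (simp add: c_def)
      also have "\<dots> = 0" using c0 that k by simp
      finally show ?thesis .
    qed
    hence "v = 0\<^sub>v k" using v(1) by (intro eq_vecI) auto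
    thus False using v(2) by contradiction
  qed
  moreover have "c \<in> carrier_vec r" by (simp add: c_def)
  ultimately show ?thesis using that by blast
qed

lemma transpose_right_inverse_inj:
  fixes A :: "'a :: comm_ring_1 mat"
  assumes A: "A \<in> carrier_mat r n" and B: "B \<in> carrier_mat n r" and AB: "A * B = 1\<^sub>m r"
    and c: "c \<in> carrier_vec r" and z: "transpose_mat A *\<^sub>v c = 0\<^sub>v n"
  shows "c = 0\<^sub>v r"
proof -
  have "c = transpose_mat (A * B) *\<^sub>v c" using AB c by simp
  also have "\<dots> = transpose_mat B *\<^sub>v (transpose_mat A *\<^sub>v c)"
    unfolding transpose_mult[OF A B] using A B c by (simp add: assoc_mult_mat_vec[of _ r n _ r])
  also have "\<dots> = 0\<^sub>v r" unfolding z using B by auto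
  finally show ?thesis .
qed

lemma right_inverse_row_nonzero:
  fixes A :: "'a :: comm_ring_1 mat"
  assumes A: "A \<in> carrier_mat r n" and B: "B \<in> carrier_mat n r" and AB: "A * B = 1\<^sub>m r" and i: "i < r"
  shows "row A i \<noteq> 0\<^sub>v n"
proof
  assume "row A i = 0\<^sub>v n"
  hence "(A * B) $$ (i,i) = 0" using A B i by simp
  thus False using AB i by simp
qed

lemma row_mat_of_row_mult:
  assumes "A \<in> carrier_mat r n" "B \<in> carrier_mat n k" "i < r"
  shows "row (mat_of_row (row A i) * B) 0 = row (A * B) i"
proof -
  have "vec n (($) (row A i)) = row A i" using assms(1) by (intro eq_vecI) auto
  thus ?thesis using assms by (intro eq_vecI) (auto simp: mat_of_row_def)
qed

text \<open>\<open>proj_mat r n\<close> is the block matrix \<open>[I\<^sub>r 0]\<close>, which takes the first \<open>r\<close> rows of a matrix.\<close>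

definition proj_mat :: "nat \<Rightarrow> nat \<Rightarrow> 'a :: zero_neq_one mat" where
  "proj_mat r n = mat r n (\<lambda>(i,j). if i = j then 1 else 0)"

lemma proj_mat_carrier [simp]: "proj_mat r n \<in> carrier_mat r n"
  by (simp add: proj_mat_def)

lemma proj_mat_mult:
  fixes A :: "'a :: semiring_1 mat"
  assumes "r \<le> n" "A \<in> carrier_mat n k"
  shows "proj_mat r n * A = mat r k (\<lambda>(i,j). A $$ (i,j))"
proof (rule eq_matI)
  fix i j assume "i < dim_row (mat r k (\<lambda>(i,j). A $$ (i,j)))" "j < dim_col (mat r k (\<lambda>(i,j). A $$ (i,j)))"
  hence ij: "i < r" "j < k" by auto
  have "(proj_mat r n * A) $$ (i,j) = (\<Sum>l = 0..<n. (if l = i then 1 else 0) * A $$ (l,j))"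
    using assms ij by (auto simp: proj_mat_def scalar_prod_def intro!: sum.cong)
  also have "\<dots> = A $$ (i,j)"
    using ij assms(1) by (simp add: if_distrib[of "\<lambda>x. x * _"] sum.delta cong: if_cong)
  finally show "(proj_mat r n * A) $$ (i,j) = mat r k (\<lambda>(i,j). A $$ (i,j)) $$ (i,j)" using ij by simp
qed (use assms in \<open>auto simp: proj_mat_def\<close>)

lemma proj_mat_mult_transpose:
  "r \<le> n \<Longrightarrow> proj_mat r n * transpose_mat (proj_mat r n) = (1\<^sub>m r :: 'a :: semiring_1 mat)"
  by (subst proj_mat_mult) (auto simp: proj_mat_def intro!: eq_matI)

lemma proj_mat_mult_mat_diag:
  fixes f :: "nat \<Rightarrow> 'a :: semiring_1"
  assumes "r \<le> n"
  shows "proj_mat r n * mat_diag n f = mat_diag r f * proj_mat r n"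
  unfolding mat_diag_mult_right[OF proj_mat_carrier] mat_diag_mult_left[OF proj_mat_carrier]
  by (auto simp: proj_mat_def intro!: eq_matI)

lemma kernel_dim_mat_diag_reverse:
  "kernel.dim n (mat_diag n f) = kernel.dim n (mat_diag n (\<lambda>i. f (n - 1 - i)) :: 'a :: field mat)"
proof -
  define R :: "'a mat" where "R = mat n n (\<lambda>(i,j). if j = n - 1 - i then 1 else 0)"
  define Dr where "Dr = mat_diag n (\<lambda>i. f (n - 1 - i))"
  have R: "R \<in> carrier_mat n n" by (simp add: R_def)
  have sum_R: "(\<Sum>j = 0..<n. (if j = n - 1 - i then 1 else 0) * g j) = g (n - 1 - i)"
    if "i < n" for i and g :: "nat \<Rightarrow> 'a"
    using that by (simp add: if_distrib[of "\<lambda>x. x * _"] sum.delta' cong: if_cong)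
  have RR: "R * R = 1\<^sub>m n"
  proof (rule eq_matI)
    fix i j assume ij: "i < dim_row (1\<^sub>m n)" "j < dim_col (1\<^sub>m n)"
    hence "(R * R) $$ (i,j) = (\<Sum>l = 0..<n. (if l = n - 1 - i then 1 else 0) * R $$ (l, j))"
      by (auto simp: R_def scalar_prod_def intro!: sum.cong)
    also have "\<dots> = R $$ (n - 1 - i, j)" using ij by (subst sum_R) auto
    also have "\<dots> = 1\<^sub>m n $$ (i,j)" using ij by (auto simp: R_def)
    finally show "(R * R) $$ (i,j) = 1\<^sub>m n $$ (i,j)" .
  qed (auto simp: R_def)
  have "mat_diag n f = R * Dr * R"
  proof (rule eq_matI)
    fix i j assume "i < dim_row (R * Dr * R)" "j < dim_col (R * Dr * R)"
    hence ij: "i < n" "j < n" by (auto simp: R_def)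
    have "R * Dr = mat n n (\<lambda>(i,j). R $$ (i,j) * f (n - 1 - j))"
      unfolding Dr_def by (subst mat_diag_mult_right[OF R]) simp
    hence "(R * Dr * R) $$ (i,j) =
        (\<Sum>l = 0..<n. (if l = n - 1 - i then 1 else 0) * (f (n - 1 - l) * R $$ (l, j)))"
      using ij by (auto simp: R_def scalar_prod_def intro!: sum.cong)
    also have "\<dots> = f (n - 1 - (n - 1 - i)) * R $$ (n - 1 - i, j)" using ij by (subst sum_R) auto
    also have "\<dots> = mat_diag n f $$ (i,j)" using ij by (auto simp: R_def mat_diag_def)
    finally show "mat_diag n f $$ (i,j) = (R * Dr * R) $$ (i,j)" ..
  qed (auto simp: R_def Dr_def mat_diag_def)
  hence "similar_mat_wit (mat_diag n f) Dr R R"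
    unfolding similar_mat_wit_def using R RR by (auto simp: Let_def Dr_def)
  thus ?thesis unfolding Dr_def by (rule similar_mat_wit_kernel_dim[OF mat_diag_dim])
qed

lemma kernel_dim_mat_diag_ones_prefix:
  assumes "k \<le> n"
  shows "kernel.dim n (mat_diag n (\<lambda>i. if i < k then 1 else 0) :: 'a :: field mat) = n - k"
proof -
  let ?A = "mat_diag n (\<lambda>i. if i < k then 1 else 0) :: 'a mat"
  have "row_echelon_form ?A" unfolding row_echelon_form_def
  proof (rule exI, rule pivot_funI[of _ n])
    let ?f = "\<lambda>i. if i < k then i else n"
    fix i assume i: "i < n"
    show "?f i \<le> dim_col ?A" "Suc i < n \<Longrightarrow> ?f i < ?f (Suc i) \<or> ?f (Suc i) = dim_col ?A"
      using i by (auto simp: mat_diag_def)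
    show "\<And>j. j < ?f i \<Longrightarrow> ?A $$ (i, j) = 0" "?f i < dim_col ?A \<Longrightarrow> ?A $$ (i, ?f i) = 1"
      "\<And>i'. ?f i < dim_col ?A \<Longrightarrow> i' < n \<Longrightarrow> i' \<noteq> i \<Longrightarrow> ?A $$ (i', ?f i) = 0"
      using i by (cases "i < k"; force simp: mat_diag_def)+
  qed (simp add: mat_diag_def)
  moreover have "{i. i < n \<and> row ?A i \<noteq> 0\<^sub>v n} = {..<k}"
  proof -
    have row_char: "row ?A i \<noteq> 0\<^sub>v n \<longleftrightarrow> i < k" if "i < n" for i
    proof
      assume "i < k"
      hence "row ?A i $ i = 1" using that by (simp add: mat_diag_def)
      thus "row ?A i \<noteq> 0\<^sub>v n" using that by auto
    next
      assume "row ?A i \<noteq> 0\<^sub>v n"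
      moreover have "row ?A i = 0\<^sub>v n" if "\<not> i < k"
        using that \<open>i < n\<close> by (intro eq_vecI) (auto simp: mat_diag_def)
      ultimately show "i < k" by blast
    qed
    show ?thesis
    proof (rule Set.set_eqI, rule iffI)
      fix i assume "i \<in> {i. i < n \<and> row ?A i \<noteq> 0\<^sub>v n}"
      thus "i \<in> {..<k}" using row_char by blast
    next
      fix i assume "i \<in> {..<k}"
      moreover from this have "i < n" using assms by simp
      ultimately show "i \<in> {i. i < n \<and> row ?A i \<noteq> 0\<^sub>v n}" using row_char by blast
    qed
  qed
  ultimately show ?thesis using find_base_vectors(6)[of ?A n n] by simp
qed

lemma kernel_dim_mat_diag_zero_power:
  fixes m :: "nat \<Rightarrow> nat"
  assumes "p \<le> n" and pos: "\<And>i. i < n \<Longrightarrow> 0 < m i \<longleftrightarrow> i < p"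
  shows "kernel_dim (mat_diag n (\<lambda>i. (0 :: 'a :: field) ^ m i)) = p"
proof -
  have reversed: "mat_diag n (\<lambda>i. (0 :: 'a) ^ m (n - 1 - i)) = mat_diag n (\<lambda>i. if i < n - p then 1 else 0)"
  proof (rule mat_diag_cong)
    fix i assume "i < n"
    hence "m (n - 1 - i) = 0 \<longleftrightarrow> i < n - p" using pos[of "n - 1 - i"] assms(1) by auto
    thus "(0 :: 'a) ^ m (n - 1 - i) = (if i < n - p then 1 else 0)" by auto
  qed
  have "kernel_dim (mat_diag n (\<lambda>i. (0 :: 'a) ^ m i)) = kernel.dim n (mat_diag n (\<lambda>i. (0 :: 'a) ^ m i))"
    by (simp only: kernel_dim_def carrier_matD(2)[OF mat_diag_dim])
  also have "\<dots> = kernel.dim n (mat_diag n (\<lambda>i. (0 :: 'a) ^ m (n - 1 - i)))"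
    by (rule kernel_dim_mat_diag_reverse)
  also have "\<dots> = n - (n - p)" unfolding reversed by (rule kernel_dim_mat_diag_ones_prefix) simp
  finally show ?thesis using assms(1) by simp
qed
lemma downward_closed_eq_lessThan:
  fixes S :: "nat set"
  assumes "finite S" "\<And>i j. i \<in> S \<Longrightarrow> j \<le> i \<Longrightarrow> j \<in> S"
  shows "S = {..<card S}"
proof (cases "S = {}")
  case False
  have "S = {..Max S}"
  proof
    show "S \<subseteq> {..Max S}" using assms(1) by auto
    show "{..Max S} \<subseteq> S" using assms(2)[OF Max_in[OF assms(1) False]] by auto
  qed
  thus ?thesis by (metis card_lessThan lessThan_Suc_atMost)
qed simp

lemma add_diff_cancel_mat:
  "A \<in> carrier_mat nr nc \<Longrightarrow> B \<in> carrier_mat nr nc \<Longrightarrow> B + (A - B) = (A :: 'a :: ab_group_add mat)"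
  by (intro eq_matI) auto

lemma add_diff_add_mat:
  "A \<in> carrier_mat nr nc \<Longrightarrow> B \<in> carrier_mat nr nc \<Longrightarrow> C \<in> carrier_mat nr nc \<Longrightarrow>
    (A + B) - (A + C) = B - (C :: 'a :: ab_group_add mat)"
  by (intro eq_matI) auto

lemma add_diff_commute_mat:
  "A \<in> carrier_mat nr nc \<Longrightarrow> B \<in> carrier_mat nr nc \<Longrightarrow> C \<in> carrier_mat nr nc \<Longrightarrow>
    A + B - C = (A - C) + (B :: 'a :: ab_group_add mat)"
  by (intro eq_matI) auto

lemma diff_add_self_mat:
  "A \<in> carrier_mat nr nc \<Longrightarrow> B \<in> carrier_mat nr nc \<Longrightarrow> A - (A + B) = 0\<^sub>m nr nc - (B :: 'a :: ab_group_add mat)"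
  by (intro eq_matI) auto

section \<open>The local Smith form\<close>

locale local_smith_form =
  fixes \<Omega> :: "complex set" and a :: complex and n :: nat and T :: "complex \<Rightarrow> complex mat"
    and m :: "nat \<Rightarrow> nat" and UL UR WL WR :: "complex \<Rightarrow> complex mat"
  assumes open_\<Omega>: "open \<Omega>" and a_in_\<Omega>: "a \<in> \<Omega>" and T_hol: "hol_mat \<Omega> n n T"
    and m_antimono: "\<forall>i j. i \<le> j \<longrightarrow> j < n \<longrightarrow> m j \<le> m i"
    and UL: "hol0_mat a n n UL" and UR: "hol0_mat a n n UR"
    and WL: "hol0_mat a n n WL" and WR: "hol0_mat a n n WR"
    and UL_WL: "\<forall>\<^sub>F z in nhds a. UL z * WL z = 1\<^sub>m n \<and> WL z * UL z = 1\<^sub>m n"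
    and UR_WR: "\<forall>\<^sub>F z in nhds a. UR z * WR z = 1\<^sub>m n \<and> WR z * UR z = 1\<^sub>m n"
    and smith: "\<forall>\<^sub>F z in nhds a. UL z * T z * UR z = mat_diag n (\<lambda>i. (z - a) ^ m i)"
begin

definition "r = kernel_dim (T a)"
definition "D = (\<lambda>z. mat_diag n (\<lambda>i. (z - a) ^ m i))"
definition "Dinv = (\<lambda>z. mat_diag n (\<lambda>i. 1 / (z - a) ^ m i))"
definition "\<Delta> = (\<lambda>z. mat_diag r (\<lambda>i. (z - a) ^ m i))"
definition "\<Delta>inv = (\<lambda>z. mat_diag r (\<lambda>i. 1 / (z - a) ^ m i))"

lemma D_carrier [simp]: "D z \<in> carrier_mat n n" "Dinv z \<in> carrier_mat n n"
  and \<Delta>_carrier [simp]: "\<Delta> z \<in> carrier_mat r r" "\<Delta>inv z \<in> carrier_mat r r"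
  by (auto simp: D_def Dinv_def \<Delta>_def \<Delta>inv_def)

lemma D_Dinv: "z \<noteq> a \<Longrightarrow> D z * Dinv z = 1\<^sub>m n" "z \<noteq> a \<Longrightarrow> Dinv z * D z = 1\<^sub>m n"
  and \<Delta>_\<Delta>inv: "z \<noteq> a \<Longrightarrow> \<Delta> z * \<Delta>inv z = 1\<^sub>m r" "z \<noteq> a \<Longrightarrow> \<Delta>inv z * \<Delta> z = 1\<^sub>m r"
  unfolding D_def Dinv_def \<Delta>_def \<Delta>inv_def mat_diag_diag
  by (subst mat_diag_one[symmetric], rule mat_diag_cong, simp)+

lemma hol0_T: "hol0_mat a n n T"
  by (rule hol_mat_imp_hol0_mat[OF open_\<Omega> a_in_\<Omega> T_hol])

definition smith_at :: "complex \<Rightarrow> bool" where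
  "smith_at z \<longleftrightarrow> T z \<in> carrier_mat n n \<and>
     UL z \<in> carrier_mat n n \<and> UR z \<in> carrier_mat n n \<and> WL z \<in> carrier_mat n n \<and> WR z \<in> carrier_mat n n \<and>
     UL z * WL z = 1\<^sub>m n \<and> WL z * UL z = 1\<^sub>m n \<and> UR z * WR z = 1\<^sub>m n \<and> WR z * UR z = 1\<^sub>m n \<and>
     UL z * T z * UR z = D z"

lemma eventually_smith_at: "\<forall>\<^sub>F z in nhds a. smith_at z"
  using hol0_matD(1)[OF hol0_T] hol0_matD(1)[OF UL] hol0_matD(1)[OF UR]
    hol0_matD(1)[OF WL] hol0_matD(1)[OF WR] UL_WL UR_WR smith
  by eventually_elim (auto simp: smith_at_def D_def)

lemma smith_at_center: "smith_at a"
  using eventually_nhds_x_imp_x[OF eventually_smith_at] .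

lemma smith_at_UL_T:
  assumes "smith_at z"
  shows "UL z * T z = D z * WR z"
proof -
  from assms have c: "T z \<in> carrier_mat n n" "UL z \<in> carrier_mat n n" "UR z \<in> carrier_mat n n"
    "WR z \<in> carrier_mat n n" and inv: "UR z * WR z = 1\<^sub>m n" and s: "UL z * T z * UR z = D z"
    by (auto simp: smith_at_def)
  have "UL z * T z = UL z * T z * (UR z * WR z)" using inv c by simp
  also have "\<dots> = D z * WR z"
    unfolding s[symmetric] using assoc_mult_mat[OF mult_carrier_mat[OF c(2) c(1)] c(3) c(4)] by simp
  finally show ?thesis .
qed

lemma smith_at_T:
  assumes "smith_at z"
  shows "T z = WL z * (D z * WR z)"
proof -
  from assms have c: "T z \<in> carrier_mat n n" "UL z \<in> carrier_mat n n" "WL z \<in> carrier_mat n n"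
    and inv: "WL z * UL z = 1\<^sub>m n" by (auto simp: smith_at_def)
  show ?thesis unfolding smith_at_UL_T[OF assms, symmetric]
    using c inv by (simp add: mult_cancel_right_inverse[of _ n n])
qed

text \<open>At \<open>a\<close>, \<open>T\<close> is equivalent to the diagonal matrix with entries \<open>0 ^ m i\<close>, so \<open>r\<close> counts the
  positive partial multiplicities; as these come first, they are exactly \<open>m 0, \<dots>, m (r - 1)\<close>.\<close>

lemma r_eq_kernel_dim_D: "r = kernel_dim (D a)"
proof -
  from smith_at_center have c: "T a \<in> carrier_mat n n" "UL a \<in> carrier_mat n n" "UR a \<in> carrier_mat n n"
    "WL a \<in> carrier_mat n n" "WR a \<in> carrier_mat n n" and inv: "UL a * WL a = 1\<^sub>m n" "WR a * UR a = 1\<^sub>m n"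
    by (auto simp: smith_at_def)
  have DW: "D a * WR a \<in> carrier_mat n n" by (rule mult_carrier_mat[OF D_carrier(1) c(5)])
  have "r = kernel.dim n (WL a * (D a * WR a))"
    unfolding r_def kernel_dim_def smith_at_T[OF smith_at_center] using c by simp
  also have "\<dots> = kernel.dim n (D a * WR a)" unfolding mat_kernel_mult_eq[OF DW c(4) c(2) inv(1)] ..
  also have "\<dots> = kernel.dim n (D a)" by (rule mat_kernel_dim_mult_eq_right[OF D_carrier(1) c(5) c(3) inv(2)])
  finally show ?thesis unfolding kernel_dim_def carrier_matD(2)[OF D_carrier(1)] .
qed

lemma m_pos_iff: "i < n \<Longrightarrow> 0 < m i \<longleftrightarrow> i < r"
  and r_le_n: "r \<le> n"
proof -
  let ?P = "{i. i < n \<and> 0 < m i}"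
  define p where "p = card ?P"
  have "?P = {..<card ?P}"
  proof (rule downward_closed_eq_lessThan)
    show "finite ?P" by (rule finite_subset[of _ "{..<n}"]) auto
    fix i j assume "i \<in> ?P" "j \<le> i"
    thus "j \<in> ?P" using m_antimono[rule_format, of j i] by auto
  qed
  hence P: "?P = {..<p}" unfolding p_def .
  have p: "p \<le> n" unfolding p_def using card_mono[of "{..<n}" ?P] by auto
  have pos: "0 < m i \<longleftrightarrow> i < p" if "i < n" for i
    using that P[THEN eqset_imp_iff, of i] by simp
  have "r = p" unfolding r_eq_kernel_dim_D D_def by (simp add: kernel_dim_mat_diag_zero_power[OF p pos])
  thus "r \<le> n" "i < n \<Longrightarrow> 0 < m i \<longleftrightarrow> i < r" using p pos by auto
qed

lemma m_pos: "i < r \<Longrightarrow> 0 < m i"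
  using m_pos_iff r_le_n by auto

lemma m_eq_0: "r \<le> i \<Longrightarrow> i < n \<Longrightarrow> m i = 0"
  using m_pos_iff by fastforce

lemma mat_inv_T:
  assumes "smith_at z" "z \<noteq> a"
  shows "mat_inv (T z) = UR z * (Dinv z * UL z)"
    and "mat_inv (T z) \<in> carrier_mat n n" "mat_inv (T z) * T z = 1\<^sub>m n"
proof -
  from assms have c: "T z \<in> carrier_mat n n" "UL z \<in> carrier_mat n n" "UR z \<in> carrier_mat n n"
    "WL z \<in> carrier_mat n n" "WR z \<in> carrier_mat n n" and inv: "UL z * WL z = 1\<^sub>m n" "WL z * UL z = 1\<^sub>m n"
    "UR z * WR z = 1\<^sub>m n" "WR z * UR z = 1\<^sub>m n" by (auto simp: smith_at_def)
  note simps = c assoc_mult_mat[of _ n n _ n _ n] mult_carrier_mat[of _ n n _ n] mult_cancel_right_inverse[of _ n n _ _ n]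
  let ?S = "UR z * (Dinv z * UL z)"
  have "T z * ?S = WL z * ((D z * Dinv z) * UL z)"
    unfolding smith_at_T[OF assms(1)] using inv by (simp add: simps)
  hence right: "T z * ?S = 1\<^sub>m n" using c inv D_Dinv[OF assms(2)] by simp
  have "?S * T z = UR z * ((Dinv z * D z) * WR z)"
    unfolding smith_at_T[OF assms(1)] using inv by (simp add: simps)
  hence left: "?S * T z = 1\<^sub>m n" using c inv D_Dinv[OF assms(2)] by simp
  show inv_T: "mat_inv (T z) = ?S" by (rule mat_inv_unique[OF c(1) _ right left]) (simp add: simps)
  show "mat_inv (T z) \<in> carrier_mat n n" "mat_inv (T z) * T z = 1\<^sub>m n"
    unfolding inv_T using left by (simp_all add: simps)
qed

lemma Dinv_mult_eq:
  assumes Z: "Z \<in> carrier_mat n k" and top_zero: "\<And>i j. i < r \<Longrightarrow> j < k \<Longrightarrow> Z $$ (i,j) = 0"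
  shows "Dinv z * Z = Z"
proof (rule eq_matI)
  fix i j assume "i < dim_row Z" "j < dim_col Z"
  hence ij: "i < n" "j < k" using Z by auto
  have "1 / (z - a) ^ m i * Z $$ (i,j) = Z $$ (i,j)"
    using top_zero[of i j] m_eq_0[of i] ij by (cases "i < r") auto
  thus "(Dinv z * Z) $$ (i,j) = Z $$ (i,j)" unfolding Dinv_def mat_diag_mult_left[OF Z] using ij by simp
qed (use Z in \<open>auto simp: Dinv_def mat_diag_def\<close>)

lemma proj_mat_mult_D: "proj_mat r n * D z = \<Delta> z * proj_mat r n"
  unfolding D_def \<Delta>_def by (rule proj_mat_mult_mat_diag[OF r_le_n])

end

section \<open>Canonical systems\<close>

locale canonical_system = local_smith_form +
  fixes Y :: "complex \<Rightarrow> complex mat"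
  assumes Y_canonical: "right_canonical \<Omega> a n T m Y"
begin

definition "X = (\<lambda>z. WR z * Y z)"
definition "Ty j = (\<lambda>z. T z *\<^sub>v col (Y z) j)"
definition "\<nu> j = root_mult a n T (\<lambda>z. col (Y z) j)"

lemma Y_hol: "hol_mat \<Omega> n r Y"
  and Y_root: "\<And>j. j < r \<Longrightarrow> root_fun \<Omega> a n T (\<lambda>z. col (Y z) j)"
  and Y_center_inj: "\<And>c. c \<in> carrier_vec r \<Longrightarrow> Y a *\<^sub>v c = 0\<^sub>v n \<Longrightarrow> c = 0\<^sub>v r"
  and sum_\<nu>: "(\<Sum>j<r. \<nu> j) = (\<Sum>j<r. m j)"
  and \<nu>_antimono: "\<And>i j. i \<le> j \<Longrightarrow> j < r \<Longrightarrow> \<nu> j \<le> \<nu> i"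
  using Y_canonical unfolding right_canonical_def Let_def r_def \<nu>_def by auto

lemma hol0_Y: "hol0_mat a n r Y"
  by (rule hol_mat_imp_hol0_mat[OF open_\<Omega> a_in_\<Omega> Y_hol])

lemma hol0_X: "hol0_mat a n r X"
  unfolding X_def by (rule hol0_mat_mult[OF WR hol0_Y])

lemma eventually_smith_Y: "\<forall>\<^sub>F z in nhds a. smith_at z \<and> Y z \<in> carrier_mat n r"
  using eventually_smith_at hol0_matD(1)[OF hol0_Y] by eventually_elim simp

lemma Y_eq_UR_X: "smith_at z \<Longrightarrow> Y z \<in> carrier_mat n r \<Longrightarrow> Y z = UR z * X z"
  by (auto simp: smith_at_def X_def mult_cancel_right_inverse[of _ n n])

lemma UL_T_Y:
  assumes "smith_at z" "Y z \<in> carrier_mat n r"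
  shows "UL z * (T z * Y z) = D z * X z"
proof -
  from assms have c: "T z \<in> carrier_mat n n" "UL z \<in> carrier_mat n n" "WR z \<in> carrier_mat n n"
    by (auto simp: smith_at_def)
  have "UL z * (T z * Y z) = (UL z * T z) * Y z" by (rule assoc_mult_mat[symmetric, OF c(2,1) assms(2)])
  also have "\<dots> = D z * X z"
    unfolding smith_at_UL_T[OF assms(1)] X_def by (rule assoc_mult_mat[OF D_carrier(1) c(3) assms(2)])
  finally show ?thesis .
qed

lemma X_center_inj:
  assumes c: "c \<in> carrier_vec r" and Xc: "X a *\<^sub>v c = 0\<^sub>v n"
  shows "c = 0\<^sub>v r"
proof (rule Y_center_inj[OF c])
  have s: "smith_at a" "Y a \<in> carrier_mat n r" using eventually_nhds_x_imp_x[OF eventually_smith_Y] by auto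
  hence "UR a \<in> carrier_mat n n" "X a \<in> carrier_mat n r" by (auto simp: smith_at_def X_def)
  thus "Y a *\<^sub>v c = 0\<^sub>v n" unfolding Y_eq_UR_X[OF s] using c Xc by auto
qed

lemma X_center_col_nonzero:
  assumes j: "j < r"
  obtains i where "i < n" "X a $$ (i,j) \<noteq> 0"
proof -
  have s: "smith_at a" "Y a \<in> carrier_mat n r" using eventually_nhds_x_imp_x[OF eventually_smith_Y] by auto
  hence c: "UR a \<in> carrier_mat n n" "X a \<in> carrier_mat n r" by (auto simp: smith_at_def X_def)
  have "col (Y a) j \<noteq> 0\<^sub>v n" using Y_root[OF j] unfolding root_fun_def by auto
  hence col_nz: "col (X a) j \<noteq> 0\<^sub>v n" using c j unfolding Y_eq_UR_X[OF s] by auto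
  have "\<not> (\<forall>i<n. X a $$ (i,j) = 0)"
  proof
    assume "\<forall>i<n. X a $$ (i,j) = 0"
    hence "col (X a) j = 0\<^sub>v n" using c j by (intro eq_vecI) auto
    thus False using col_nz by contradiction
  qed
  thus ?thesis using that by blast
qed

lemma D_X_entry:
  "X z \<in> carrier_mat n r \<Longrightarrow> i < n \<Longrightarrow> j < r \<Longrightarrow> (D z * X z) $$ (i,j) = (z - a) ^ m i * X z $$ (i,j)"
  unfolding D_def by (simp add: mat_diag_mult_left)

text \<open>Row \<open>i\<close> of \<open>UL T Y = D X\<close> shows that a power of \<open>z - a\<close> dividing \<open>T y\<^sub>j\<close> also divides
  \<open>(z - a) ^ m i * X\<^sub>i\<^sub>j\<close>; if \<open>X\<^sub>i\<^sub>j(a) \<noteq> 0\<close>, its exponent is at most \<open>m i\<close>.\<close>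

lemma Ty_power_divides_bound:
  assumes j: "j < r" and i: "i < n" "X a $$ (i,j) \<noteq> 0" and div: "vec_power_divides a n k (Ty j)"
  shows "k \<le> m i"
proof (rule ccontr)
  assume "\<not> k \<le> m i"
  obtain g :: "complex \<Rightarrow> complex vec" where g: "\<forall>\<^sub>F z in nhds a. g z \<in> carrier_vec n"
    "\<forall>l<n. (\<lambda>z. g z $ l) analytic_on {a}" "\<forall>\<^sub>F z in nhds a. Ty j z = (z - a) ^ k \<cdot>\<^sub>v g z"
    using div unfolding vec_power_divides_def by blast
  have "X a $$ (i,j) = 0"
  proof (rule analytic_at_cancel_power_eq_0[of _ a "\<lambda>z. \<Sum>l<n. UL z $$ (i,l) * g z $ l" "m i" k])
    show "(\<lambda>z. X z $$ (i,j)) analytic_on {a}" using hol0_matD(2)[OF hol0_X i(1) j] .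
    show "(\<lambda>z. \<Sum>l<n. UL z $$ (i,l) * g z $ l) analytic_on {a}"
      using hol0_matD(2)[OF UL] g(2) i by (auto intro!: analytic_intros)
    show "m i < k" using \<open>\<not> k \<le> m i\<close> by simp
    show "\<forall>\<^sub>F z in at a. (z - a) ^ m i * X z $$ (i,j) = (z - a) ^ k * (\<Sum>l<n. UL z $$ (i,l) * g z $ l)"
      using eventually_at_if_nhds[OF eventually_smith_Y] eventually_at_if_nhds[OF g(1)]
        eventually_at_if_nhds[OF g(3)]
    proof eventually_elim
      case (elim z)
      hence c: "UL z \<in> carrier_mat n n" "T z \<in> carrier_mat n n" "Y z \<in> carrier_mat n r"
        "X z \<in> carrier_mat n r" by (auto simp: smith_at_def X_def)
      have "(z - a) ^ m i * X z $$ (i,j) = (UL z * (T z * Y z)) $$ (i,j)"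
        using D_X_entry[OF c(4) i(1) j] UL_T_Y elim(1) by simp
      also have "\<dots> = row (UL z) i \<bullet> Ty j z" using c i j by (simp add: Ty_def mult_mat_vec_def)
      also have "\<dots> = (z - a) ^ k * (\<Sum>l<n. UL z $$ (i,l) * g z $ l)"
        using c i elim(2,3) by (auto simp: scalar_prod_def sum_distrib_left algebra_simps intro!: sum.cong)
      finally show ?case .
    qed
  qed
  thus False using i(2) by contradiction
qed

lemma Ty_zero_order: "j < r \<Longrightarrow> vec_zero_order a n (Ty j) (\<nu> j)"
proof -
  assume j: "j < r"
  obtain i where i: "i < n" "X a $$ (i,j) \<noteq> 0" using X_center_col_nonzero[OF j] .
  have div0: "vec_power_divides a n 0 (Ty j)" unfolding vec_power_divides_def
  proof (intro exI conjI allI impI)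
    show "\<forall>\<^sub>F z in nhds a. Ty j z \<in> carrier_vec n"
      using eventually_smith_Y by eventually_elim (auto simp: Ty_def smith_at_def)
    show "\<forall>\<^sub>F z in nhds a. Ty j z = (z - a) ^ 0 \<cdot>\<^sub>v Ty j z" by simp
    fix l assume l: "l < n"
    have "\<forall>\<^sub>F z in nhds a. (T z * Y z) $$ (l,j) = Ty j z $ l"
      using eventually_smith_Y by eventually_elim (use j l in \<open>auto simp: Ty_def smith_at_def\<close>)
    thus "(\<lambda>z. Ty j z $ l) analytic_on {a}"
      using hol0_matD(2)[OF hol0_mat_mult[OF hol0_T hol0_Y] l j] by (rule analytic_at_transfer)
  qed
  obtain k where k: "vec_zero_order a n (Ty j) k"
    using vec_zero_order_exists[OF div0 Ty_power_divides_bound[OF j i]] by blast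
  have "\<nu> j = k" unfolding \<nu>_def root_mult_def using the_vec_zero_order[OF k[unfolded Ty_def]] .
  thus ?thesis using k by simp
qed

lemma \<nu>_pos: "j < r \<Longrightarrow> 0 < \<nu> j"
  using vec_zero_order_eq_0_iff[OF Ty_zero_order] Y_root unfolding root_fun_def Ty_def by auto

definition "Ty_quot j = (SOME g. (\<forall>\<^sub>F z in nhds a. g z \<in> carrier_vec n) \<and>
  (\<forall>i<n. (\<lambda>z. g z $ i) analytic_on {a}) \<and> g a \<noteq> 0\<^sub>v n \<and>
  (\<forall>\<^sub>F z in nhds a. Ty j z = (z - a) ^ \<nu> j \<cdot>\<^sub>v g z))"

lemma Ty_quot:
  assumes "j < r"
  shows "\<forall>\<^sub>F z in nhds a. Ty_quot j z \<in> carrier_vec n \<and> Ty j z = (z - a) ^ \<nu> j \<cdot>\<^sub>v Ty_quot j z"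
    and "\<And>i. i < n \<Longrightarrow> (\<lambda>z. Ty_quot j z $ i) analytic_on {a}"
proof -
  have "\<exists>g. (\<forall>\<^sub>F z in nhds a. g z \<in> carrier_vec n) \<and> (\<forall>i<n. (\<lambda>z. g z $ i) analytic_on {a}) \<and>
      g a \<noteq> 0\<^sub>v n \<and> (\<forall>\<^sub>F z in nhds a. Ty j z = (z - a) ^ \<nu> j \<cdot>\<^sub>v g z)"
    using Ty_zero_order[OF assms] unfolding vec_zero_order_def by blast
  from someI_ex[OF this, folded Ty_quot_def]
  show "\<forall>\<^sub>F z in nhds a. Ty_quot j z \<in> carrier_vec n \<and> Ty j z = (z - a) ^ \<nu> j \<cdot>\<^sub>v Ty_quot j z"
    "\<And>i. i < n \<Longrightarrow> (\<lambda>z. Ty_quot j z $ i) analytic_on {a}"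
    by (auto elim: eventually_elim2)
qed

definition "G = (\<lambda>z. mat n r (\<lambda>(i,j). Ty_quot j z $ i))"
definition "N = (\<lambda>z. UL z * G z)"

lemma G_carrier [simp]: "G z \<in> carrier_mat n r"
  by (simp add: G_def)

lemma hol0_G: "hol0_mat a n r G"
  unfolding G_def by (rule hol0_mat_mat) (use Ty_quot(2) in auto)

lemma hol0_N: "hol0_mat a n r N"
  unfolding N_def by (rule hol0_mat_mult[OF UL hol0_G])

lemma eventually_T_Y_eq_G: "\<forall>\<^sub>F z in nhds a. T z * Y z = G z * mat_diag r (\<lambda>j. (z - a) ^ \<nu> j)"
proof -
  have "\<forall>\<^sub>F z in nhds a. \<forall>j\<in>{..<r}. Ty_quot j z \<in> carrier_vec n \<and> Ty j z = (z - a) ^ \<nu> j \<cdot>\<^sub>v Ty_quot j z"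
    by (rule eventually_ball_finite) (use Ty_quot(1) in auto)
  thus ?thesis using eventually_smith_Y
  proof eventually_elim
    case (elim z)
    hence c: "T z \<in> carrier_mat n n" "Y z \<in> carrier_mat n r" by (auto simp: smith_at_def)
    show ?case unfolding mat_diag_mult_right[OF G_carrier]
    proof (rule eq_matI)
      fix i j assume ij: "i < dim_row (mat n r (\<lambda>(i,j). G z $$ (i,j) * (z - a) ^ \<nu> j))"
        "j < dim_col (mat n r (\<lambda>(i,j). G z $$ (i,j) * (z - a) ^ \<nu> j))"
      hence "i < n" "j < r" by auto
      moreover from this have "Ty j z = (z - a) ^ \<nu> j \<cdot>\<^sub>v Ty_quot j z" "Ty_quot j z \<in> carrier_vec n"
        using elim(1) by auto
      ultimately have "(T z * Y z) $$ (i,j) = ((z - a) ^ \<nu> j \<cdot>\<^sub>v Ty_quot j z) $ i"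
        using c by (simp add: Ty_def mult_mat_vec_def flip: \<open>Ty j z = _\<close>)
      thus "(T z * Y z) $$ (i,j) = mat n r (\<lambda>(i,j). G z $$ (i,j) * (z - a) ^ \<nu> j) $$ (i,j)"
        using \<open>i < n\<close> \<open>j < r\<close> \<open>Ty_quot j z \<in> carrier_vec n\<close> by (simp add: G_def)
    qed (use c in simp_all)
  qed
qed

lemma eventually_X_N_entry:
  assumes "i < n" "j < r"
  shows "\<forall>\<^sub>F z in nhds a. (z - a) ^ m i * X z $$ (i,j) = (z - a) ^ \<nu> j * N z $$ (i,j)"
  using eventually_smith_Y eventually_T_Y_eq_G
proof eventually_elim
  case (elim z)
  hence c: "UL z \<in> carrier_mat n n" "X z \<in> carrier_mat n r" by (auto simp: smith_at_def X_def)
  have "(z - a) ^ m i * X z $$ (i,j) = (UL z * (T z * Y z)) $$ (i,j)"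
    using D_X_entry[OF c(2) assms] UL_T_Y[of z] elim(1) by simp
  also have "\<dots> = (UL z * (G z * mat_diag r (\<lambda>j. (z - a) ^ \<nu> j))) $$ (i,j)"
    unfolding elim(2) ..
  also have "\<dots> = (N z * mat_diag r (\<lambda>j. (z - a) ^ \<nu> j)) $$ (i,j)"
    unfolding N_def using assoc_mult_mat[OF c(1) G_carrier mat_diag_dim] by simp
  also have "\<dots> = (z - a) ^ \<nu> j * N z $$ (i,j)"
    unfolding N_def mat_diag_mult_right[OF mult_carrier_mat[OF c(1) G_carrier[of z]]] using assms by simp
  finally show ?case .
qed

lemma X_center_eq_0:
  assumes "i < n" "j < r" "m i < \<nu> j"
  shows "X a $$ (i,j) = 0"
  by (rule analytic_at_cancel_power_eq_0[OF hol0_matD(2)[OF hol0_X] hol0_matD(2)[OF hol0_N]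
      eventually_at_if_nhds[OF eventually_X_N_entry]]) (use assms in auto)

text \<open>If \<open>\<nu> k > m k\<close>, the columns \<open>0, \<dots>, k\<close> of \<open>X(a)\<close> vanish below row \<open>k\<close>, so they are
  linearly dependent, contradicting the injectivity of \<open>Y(a)\<close>.  Since the sums of both sequences
  agree, this forces \<open>\<nu> = m\<close>.\<close>

lemma \<nu>_le_m: "k < r \<Longrightarrow> \<nu> k \<le> m k"
proof (rule ccontr)
  assume k: "k < r" "\<not> \<nu> k \<le> m k"
  have kn: "k < n" using k r_le_n by simp
  have Xc: "X a \<in> carrier_mat n r" using hol0_mat_carrier[OF hol0_X] .
  have low: "X a $$ (i,j) = 0" if "k \<le> i" "i < n" "j < Suc k" for i j
  proof (rule X_center_eq_0)
    have "m i \<le> m k" "\<nu> k \<le> \<nu> j" using m_antimono that k \<nu>_antimono[of j k] by auto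
    thus "m i < \<nu> j" using k by simp
  qed (use that k in auto)
  have det: "det (mat (Suc k) (Suc k) (\<lambda>(i,j). X a $$ (i,j))) = 0"
    by (rule det_zero_row[of _ "Suc k" k]) (use low kn in auto)
  have low': "X a $$ (i,j) = 0" if "Suc k \<le> i" "i < n" "j < Suc k" for i j
    using low that by simp
  obtain c where "c \<in> carrier_vec r" "c \<noteq> 0\<^sub>v r" "X a *\<^sub>v c = 0\<^sub>v n"
    using mat_kernel_nonzero_if_block_singular[OF Xc Suc_leI[OF k(1)] low' det] by blast
  thus False using X_center_inj by blast
qed

lemma \<nu>_eq_m: "j < r \<Longrightarrow> \<nu> j = m j"
proof -
  assume j: "j < r"
  have "(\<Sum>j<r. m j - \<nu> j) = (\<Sum>j<r. m j) - (\<Sum>j<r. \<nu> j)"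
    by (rule sum_subtractf_nat) (use \<nu>_le_m in auto)
  hence "\<forall>j\<in>{..<r}. m j - \<nu> j = 0" using sum_\<nu> by simp
  hence "m j - \<nu> j = 0" using j by blast
  thus ?thesis using \<nu>_le_m[OF j] by linarith
qed

lemma mat_diag_\<nu>: "mat_diag r (\<lambda>j. (z - a) ^ \<nu> j) = \<Delta> z"
  unfolding \<Delta>_def by (rule mat_diag_cong) (simp add: \<nu>_eq_m)

lemma X_center_lower_eq_0: "r \<le> i \<Longrightarrow> i < n \<Longrightarrow> j < r \<Longrightarrow> X a $$ (i,j) = 0"
  using X_center_eq_0 m_eq_0 \<nu>_pos by simp

definition "X1 = (\<lambda>z. mat r r (\<lambda>(i,j). X z $$ (i,j)))"
definition "M = (\<lambda>z. mat r r (\<lambda>(i,j). N z $$ (i,j)))"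

lemma X1_carrier [simp]: "X1 z \<in> carrier_mat r r" and M_carrier [simp]: "M z \<in> carrier_mat r r"
  by (simp_all add: X1_def M_def)

lemma hol0_X1: "hol0_mat a r r X1"
  unfolding X1_def by (rule hol0_mat_mat) (use hol0_matD(2)[OF hol0_X] r_le_n in auto)

lemma hol0_M: "hol0_mat a r r M"
  unfolding M_def by (rule hol0_mat_mat) (use hol0_matD(2)[OF hol0_N] r_le_n in auto)

lemma proj_mat_mult_X: "X z \<in> carrier_mat n r \<Longrightarrow> proj_mat r n * X z = X1 z"
  unfolding X1_def by (rule proj_mat_mult[OF r_le_n])

lemma proj_mat_mult_N: "N z \<in> carrier_mat n r \<Longrightarrow> proj_mat r n * N z = M z"
  unfolding M_def by (rule proj_mat_mult[OF r_le_n])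

lemma det_X1_center: "det (X1 a) \<noteq> 0"
proof
  assume "det (X1 a) = 0"
  then obtain c where "c \<in> carrier_vec r" "c \<noteq> 0\<^sub>v r" "X a *\<^sub>v c = 0\<^sub>v n"
    using mat_kernel_nonzero_if_block_singular[OF hol0_mat_carrier[OF hol0_X] order.refl
      X_center_lower_eq_0] unfolding X1_def by blast
  thus False using X_center_inj by blast
qed

lemma eventually_D_X_eq_N: "\<forall>\<^sub>F z in nhds a. D z * X z = N z * \<Delta> z"
  using eventually_smith_Y eventually_T_Y_eq_G
proof eventually_elim
  case (elim z)
  hence s: "smith_at z" "Y z \<in> carrier_mat n r" and c: "UL z \<in> carrier_mat n n"
    by (auto simp: smith_at_def)
  show ?case unfolding UL_T_Y[OF s, symmetric] elim(2) mat_diag_\<nu> N_def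
    by (rule assoc_mult_mat[symmetric, OF c G_carrier \<Delta>_carrier(1)])
qed

lemma eventually_\<Delta>_X1_eq_M: "\<forall>\<^sub>F z in nhds a. \<Delta> z * X1 z = M z * \<Delta> z"
  using eventually_D_X_eq_N hol0_matD(1)[OF hol0_X] hol0_matD(1)[OF hol0_N]
proof eventually_elim
  case (elim z)
  have "\<Delta> z * X1 z = \<Delta> z * proj_mat r n * X z"
    unfolding proj_mat_mult_X[OF elim(2), symmetric] using elim(2)
    by (simp add: assoc_mult_mat[OF \<Delta>_carrier(1) proj_mat_carrier])
  also have "\<dots> = proj_mat r n * (D z * X z)"
    unfolding proj_mat_mult_D[symmetric] using elim(2)
    by (simp add: assoc_mult_mat[OF proj_mat_carrier D_carrier(1)])
  also have "\<dots> = proj_mat r n * N z * \<Delta> z"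
    unfolding elim(1) using elim(3) by (simp add: assoc_mult_mat[OF proj_mat_carrier _ \<Delta>_carrier(1)])
  also have "\<dots> = M z * \<Delta> z" unfolding proj_mat_mult_N[OF elim(3)] ..
  finally show ?case .
qed

lemma det_M_center: "det (M a) \<noteq> 0"
proof -
  have "\<forall>\<^sub>F z in at a. z \<noteq> a" by (simp add: eventually_at_filter)
  with eventually_at_if_nhds[OF eventually_\<Delta>_X1_eq_M]
  have "\<forall>\<^sub>F z in at a. det (X1 z) = det (M z)"
  proof eventually_elim
    case (elim z)
    have "det (\<Delta> z) * det (X1 z) = det (M z) * det (\<Delta> z)"
      unfolding det_mult[OF \<Delta>_carrier(1) X1_carrier, symmetric]
        det_mult[OF M_carrier \<Delta>_carrier(1), symmetric] elim(1) ..
    moreover have "det (\<Delta> z) \<noteq> 0"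
      using det_mult[OF \<Delta>_carrier, of z z] \<Delta>_\<Delta>inv(1)[OF elim(2)] by auto
    ultimately show ?case by (simp add: mult.commute)
  qed
  from eventually_nhds_x_imp_x[OF analytic_at_eventually_eq_nhds[OF analytic_at_det[OF hol0_X1]
    analytic_at_det[OF hol0_M] this]]
  show ?thesis using det_X1_center by simp
qed

definition "X1inv = inverse_near a r X1"
definition "Minv = inverse_near a r M"
definition "L = (\<lambda>z. X1inv z * (proj_mat r n * WR z))"

lemmas X1inv = inverse_near[OF hol0_X1 det_X1_center, folded X1inv_def]
lemmas Minv = inverse_near[OF hol0_M det_M_center, folded Minv_def]

lemma hol0_L: "hol0_mat a r n L"
  unfolding L_def by (rule hol0_mat_mult[OF X1inv(1) hol0_mat_mult[OF hol0_mat_const[OF proj_mat_carrier] WR]])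

abbreviation represents_inverse :: "(complex \<Rightarrow> complex mat) \<Rightarrow> bool" where
  "represents_inverse V \<equiv> dot_eq a n n (\<lambda>z. mat_inv (T z)) (\<lambda>z. Y z * \<Delta>inv z * V z)"

lemma eventually_L_Y: "\<forall>\<^sub>F z in nhds a. L z * Y z = 1\<^sub>m r"
  using eventually_smith_Y X1inv(2) hol0_matD(1)[OF X1inv(1)]
proof eventually_elim
  case (elim z)
  hence c: "WR z \<in> carrier_mat n n" "Y z \<in> carrier_mat n r" by (auto simp: smith_at_def)
  have "L z * Y z = X1inv z * (proj_mat r n * X z)"
    unfolding L_def X_def
    using assoc_mult_mat[OF elim(3) mult_carrier_mat[OF proj_mat_carrier c(1)] c(2)]
      assoc_mult_mat[OF proj_mat_carrier c(1) c(2)] by simp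
  also have "\<dots> = 1\<^sub>m r"
  proof -
    have "X z \<in> carrier_mat n r" unfolding X_def by (rule mult_carrier_mat[OF c])
    thus ?thesis using proj_mat_mult_X[of z] elim(2) by simp
  qed
  finally show ?case .
qed

definition factored_at :: "complex \<Rightarrow> bool" where
  "factored_at z \<longleftrightarrow> z \<noteq> a \<and> smith_at z \<and> Y z \<in> carrier_mat n r \<and>
     T z * Y z = G z * \<Delta> z \<and> D z * X z = N z * \<Delta> z \<and> \<Delta> z * X1 z = M z * \<Delta> z \<and> L z * Y z = 1\<^sub>m r \<and>
     X1inv z \<in> carrier_mat r r \<and> X1 z * X1inv z = 1\<^sub>m r \<and>
     Minv z \<in> carrier_mat r r \<and> M z * Minv z = 1\<^sub>m r \<and> Minv z * M z = 1\<^sub>m r"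

lemma eventually_factored_at: "\<forall>\<^sub>F z in at a. factored_at z"
proof -
  have "\<forall>\<^sub>F z in nhds a. z \<noteq> a \<longrightarrow> factored_at z"
    using eventually_smith_Y eventually_T_Y_eq_G eventually_D_X_eq_N eventually_\<Delta>_X1_eq_M eventually_L_Y
      hol0_matD(1)[OF X1inv(1)] X1inv(2) hol0_matD(1)[OF Minv(1)] Minv(2)
    by eventually_elim (simp add: factored_at_def mat_diag_\<nu>)
  thus ?thesis unfolding eventually_at_filter by (auto elim: eventually_mono)
qed

lemma factored_at_smith_at: "factored_at z \<Longrightarrow> smith_at z"
  by (simp add: factored_at_def)

lemma factored_at_carriers:
  assumes "factored_at z"
  shows "T z \<in> carrier_mat n n" "UL z \<in> carrier_mat n n" "UR z \<in> carrier_mat n n"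
    "Y z \<in> carrier_mat n r" "X z \<in> carrier_mat n r" "N z \<in> carrier_mat n r" "L z \<in> carrier_mat r n"
    "mat_inv (T z) \<in> carrier_mat n n"
  using assms mat_inv_T(2)[of z] by (auto simp: factored_at_def smith_at_def X_def N_def L_def)

lemma factored_at_T_Y_\<Delta>inv: "factored_at z \<Longrightarrow> T z * Y z * \<Delta>inv z = G z"
  unfolding factored_at_def
  by (auto simp: assoc_mult_mat[OF G_carrier \<Delta>_carrier(1) \<Delta>_carrier(2)] \<Delta>_\<Delta>inv right_mult_one_mat[OF G_carrier])

lemma factored_at_Tinv_G:
  assumes b: "factored_at z"
  shows "mat_inv (T z) * G z = Y z * \<Delta>inv z"
proof -
  note c = factored_at_carriers[OF b]
  have "mat_inv (T z) * G z = mat_inv (T z) * (T z * (Y z * \<Delta>inv z))"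
    unfolding factored_at_T_Y_\<Delta>inv[OF b, symmetric] using assoc_mult_mat[OF c(1,4) \<Delta>_carrier(2)] by simp
  also have "\<dots> = (mat_inv (T z) * T z) * (Y z * \<Delta>inv z)"
    using assoc_mult_mat[OF c(8,1) mult_carrier_mat[OF c(4) \<Delta>_carrier(2)]] by simp
  also have "\<dots> = Y z * \<Delta>inv z"
    using mat_inv_T(3)[of z] b left_mult_one_mat[OF mult_carrier_mat[OF c(4) \<Delta>_carrier(2)[of z]]]
    by (simp add: factored_at_def)
  finally show ?thesis .
qed

text \<open>The left inverse \<open>L\<close> of \<open>Y\<close> recovers \<open>\<Delta>\<^sup>-\<^sup>1 V\<close> from \<open>Y \<Delta>\<^sup>-\<^sup>1 V = T\<^sup>-\<^sup>1 + E\<close>; this is why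
  \<open>V\<close> is determined by the principal part of \<open>T\<^sup>-\<^sup>1\<close>.\<close>

lemma factored_at_\<Delta>inv_mult:
  assumes b: "factored_at z" and V: "V \<in> carrier_mat r n"
    and E: "Y z * \<Delta>inv z * V - mat_inv (T z) = E"
  shows "\<Delta>inv z * V = L z * mat_inv (T z) + L z * E"
proof -
  note c = factored_at_carriers[OF b]
  have YDV: "Y z * \<Delta>inv z * V \<in> carrier_mat n n"
    by (rule mult_carrier_mat[OF mult_carrier_mat[OF c(4) \<Delta>_carrier(2)] V])
  have E_c: "E \<in> carrier_mat n n" using E YDV c(8) by auto
  have "L z * mat_inv (T z) + L z * E = L z * (mat_inv (T z) + E)"
    by (rule mult_add_distrib_mat[symmetric, OF c(7,8) E_c])
  also have "\<dots> = L z * (Y z * \<Delta>inv z * V)"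
    unfolding E[symmetric] add_diff_cancel_mat[OF YDV c(8)] ..
  also have "\<dots> = L z * (Y z * (\<Delta>inv z * V))"
    unfolding assoc_mult_mat[OF c(4) \<Delta>_carrier(2) V] ..
  also have "\<dots> = (L z * Y z) * (\<Delta>inv z * V)"
    using assoc_mult_mat[OF c(7,4) mult_carrier_mat[OF \<Delta>_carrier(2) V]] by simp
  also have "\<dots> = \<Delta>inv z * V"
    using b left_mult_one_mat[OF mult_carrier_mat[OF \<Delta>_carrier(2)[of z] V]] by (simp add: factored_at_def)
  finally show ?thesis ..
qed

lemma biorthogonality:
  assumes V: "hol0_mat a r n V" and inv: "represents_inverse V"
  shows "dot_eq a r r (\<lambda>z. \<Delta>inv z * V z * T z * Y z * \<Delta>inv z) \<Delta>inv"
proof -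
  obtain E where E: "hol0_mat a n n E" "\<forall>\<^sub>F z in at a. Y z * \<Delta>inv z * V z - mat_inv (T z) = E z"
    using inv unfolding dot_eq_def by blast
  have "\<forall>\<^sub>F z in at a. \<Delta>inv z - \<Delta>inv z * V z * T z * Y z * \<Delta>inv z = 0\<^sub>m r r - L z * E z * G z"
    using eventually_factored_at E(2) eventually_at_if_nhds[OF hol0_matD(1)[OF V]]
      eventually_at_if_nhds[OF hol0_matD(1)[OF E(1)]]
  proof eventually_elim
    case (elim z)
    note c = factored_at_carriers[OF elim(1)]
    have DV: "\<Delta>inv z * V z \<in> carrier_mat r n" by (rule mult_carrier_mat[OF \<Delta>_carrier(2) elim(3)])
    have LTinv: "L z * mat_inv (T z) \<in> carrier_mat r n" by (rule mult_carrier_mat[OF c(7,8)])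
    have LE: "L z * E z \<in> carrier_mat r n" by (rule mult_carrier_mat[OF c(7) elim(4)])
    have "\<Delta>inv z * V z * T z * Y z * \<Delta>inv z = (\<Delta>inv z * V z) * (T z * Y z * \<Delta>inv z)"
      using assoc_mult_mat[OF DV c(1,4)] assoc_mult_mat[OF DV mult_carrier_mat[OF c(1,4)] \<Delta>_carrier(2)]
      by simp
    also have "\<dots> = (L z * mat_inv (T z) + L z * E z) * G z"
      unfolding factored_at_T_Y_\<Delta>inv[OF elim(1)] factored_at_\<Delta>inv_mult[OF elim(1,3,2)] ..
    also have "\<dots> = L z * (mat_inv (T z) * G z) + L z * E z * G z"
      using add_mult_distrib_mat[OF LTinv LE G_carrier] assoc_mult_mat[OF c(7,8) G_carrier] by simp
    also have "L z * (mat_inv (T z) * G z) = \<Delta>inv z"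
      unfolding factored_at_Tinv_G[OF elim(1)] assoc_mult_mat[OF c(7,4) \<Delta>_carrier(2), symmetric]
      using elim(1) left_mult_one_mat[OF \<Delta>_carrier(2)] by (simp add: factored_at_def)
    finally show ?case using diff_add_self_mat[OF \<Delta>_carrier(2) mult_carrier_mat[OF LE G_carrier]] by simp
  qed
  moreover have "hol0_mat a r r (\<lambda>z. 0\<^sub>m r r - L z * E z * G z)"
    by (rule hol0_mat_minus[OF hol0_mat_const[OF zero_carrier_mat]
          hol0_mat_mult[OF hol0_mat_mult[OF hol0_L E(1)] hol0_G]])
  ultimately show ?thesis unfolding dot_eq_def by blast
qed

lemma represents_inverse_add:
  assumes V1: "hol0_mat a r n V1" and H: "hol0_mat a r n H"
    and V2: "\<forall>\<^sub>F z in nhds a. V2 z = V1 z + \<Delta> z * H z" and inv: "represents_inverse V1"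
  shows "represents_inverse V2"
proof -
  obtain E where E: "hol0_mat a n n E" "\<forall>\<^sub>F z in at a. Y z * \<Delta>inv z * V1 z - mat_inv (T z) = E z"
    using inv unfolding dot_eq_def by blast
  have "\<forall>\<^sub>F z in at a. Y z * \<Delta>inv z * V2 z - mat_inv (T z) = E z + Y z * H z"
    using eventually_factored_at E(2) eventually_at_if_nhds[OF hol0_matD(1)[OF V1]]
      eventually_at_if_nhds[OF hol0_matD(1)[OF H]] eventually_at_if_nhds[OF V2]
  proof eventually_elim
    case (elim z)
    note c = factored_at_carriers[OF elim(1)]
    have YD: "Y z * \<Delta>inv z \<in> carrier_mat n r" by (rule mult_carrier_mat[OF c(4) \<Delta>_carrier(2)])
    have "Y z * \<Delta>inv z * (\<Delta> z * H z) = Y z * ((\<Delta>inv z * \<Delta> z) * H z)"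
      using assoc_mult_mat[OF c(4) \<Delta>_carrier(2) mult_carrier_mat[OF \<Delta>_carrier(1) elim(4)]]
        assoc_mult_mat[OF \<Delta>_carrier(2) \<Delta>_carrier(1) elim(4)] by simp
    also have "\<dots> = Y z * H z" using \<Delta>_\<Delta>inv(2)[of z] elim(1,4) by (simp add: factored_at_def)
    finally have "Y z * \<Delta>inv z * V2 z = Y z * \<Delta>inv z * V1 z + Y z * H z"
      unfolding elim(5) using mult_add_distrib_mat[OF YD elim(3) mult_carrier_mat[OF \<Delta>_carrier(1) elim(4)]]
      by simp
    thus ?case unfolding elim(2)[symmetric]
      using add_diff_commute_mat[OF mult_carrier_mat[OF YD elim(3)] mult_carrier_mat[OF c(4) elim(4)] c(8)]
      by simp
  qed
  moreover have "hol0_mat a n n (\<lambda>z. E z + Y z * H z)"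
    by (rule hol0_mat_add[OF E(1) hol0_mat_mult[OF hol0_Y H]])
  ultimately show ?thesis unfolding dot_eq_def by blast
qed

lemma factored_at_diff:
  assumes b: "factored_at z" and V: "V1 \<in> carrier_mat r n" "V2 \<in> carrier_mat r n"
    and E: "E1 \<in> carrier_mat n n" "Y z * \<Delta>inv z * V1 - mat_inv (T z) = E1"
      "E2 \<in> carrier_mat n n" "Y z * \<Delta>inv z * V2 - mat_inv (T z) = E2"
  shows "V2 - V1 = \<Delta> z * (L z * E2 - L z * E1)"
proof -
  note c = factored_at_carriers[OF b]
  have "\<Delta>inv z * (V2 - V1) = \<Delta>inv z * V2 - \<Delta>inv z * V1"
    by (rule mult_minus_distrib_mat[OF \<Delta>_carrier(2) V(2,1)])
  also have "\<dots> = L z * E2 - L z * E1"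
    unfolding factored_at_\<Delta>inv_mult[OF b V(1) E(2)] factored_at_\<Delta>inv_mult[OF b V(2) E(4)]
    by (rule add_diff_add_mat[OF mult_carrier_mat[OF c(7,8)] mult_carrier_mat[OF c(7) E(3)]
          mult_carrier_mat[OF c(7) E(1)]])
  finally have "\<Delta> z * (\<Delta>inv z * (V2 - V1)) = \<Delta> z * (L z * E2 - L z * E1)" by simp
  thus ?thesis using \<Delta>_\<Delta>inv(1)[of z] b V
    by (simp add: factored_at_def assoc_mult_mat[OF \<Delta>_carrier(1) \<Delta>_carrier(2) minus_carrier_mat, symmetric])
qed

lemma represents_inverse_unique:
  assumes V1: "hol_mat \<Omega> r n V1" and V2: "hol_mat \<Omega> r n V2"
    and inv1: "represents_inverse V1" and inv2: "represents_inverse V2"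
  obtains H where "hol_mat \<Omega> r n H" "\<forall>z\<in>\<Omega>. V2 z = V1 z + \<Delta> z * H z"
proof -
  obtain E1 where E1: "hol0_mat a n n E1" "\<forall>\<^sub>F z in at a. Y z * \<Delta>inv z * V1 z - mat_inv (T z) = E1 z"
    using inv1 unfolding dot_eq_def by blast
  obtain E2 where E2: "hol0_mat a n n E2" "\<forall>\<^sub>F z in at a. Y z * \<Delta>inv z * V2 z - mat_inv (T z) = E2 z"
    using inv2 unfolding dot_eq_def by blast
  have K: "hol0_mat a r n (\<lambda>z. L z * E2 z - L z * E1 z)"
    by (rule hol0_mat_minus[OF hol0_mat_mult[OF hol0_L E2(1)] hol0_mat_mult[OF hol0_L E1(1)]])
  have W: "hol_mat \<Omega> r n (\<lambda>z. V2 z - V1 z)" by (rule hol_mat_minus[OF V2 V1])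
  have "\<forall>\<^sub>F z in at a. V2 z - V1 z = \<Delta> z * (L z * E2 z - L z * E1 z)"
    using eventually_factored_at E1(2) E2(2)
      eventually_at_if_nhds[OF hol0_matD(1)[OF hol_mat_imp_hol0_mat[OF open_\<Omega> a_in_\<Omega> V1]]]
      eventually_at_if_nhds[OF hol0_matD(1)[OF hol_mat_imp_hol0_mat[OF open_\<Omega> a_in_\<Omega> V2]]]
      eventually_at_if_nhds[OF hol0_matD(1)[OF E1(1)]] eventually_at_if_nhds[OF hol0_matD(1)[OF E2(1)]]
    by eventually_elim (rule factored_at_diff)
  then obtain H where H: "hol_mat \<Omega> r n H" "\<forall>z\<in>\<Omega>. V2 z - V1 z = \<Delta> z * H z"
    using hol_mat_eq_mat_diag_power_mult[OF open_\<Omega> a_in_\<Omega> W K] unfolding \<Delta>_def by blast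
  have "V2 z = V1 z + \<Delta> z * H z" if z: "z \<in> \<Omega>" for z
  proof -
    have "V1 z \<in> carrier_mat r n" "V2 z \<in> carrier_mat r n" using V1 V2 z by (auto simp: hol_mat_def)
    thus ?thesis using add_diff_cancel_mat H(2) z by metis
  qed
  thus ?thesis using that H(1) by blast
qed

text \<open>\<open>V\<^sub>0 = M\<^sup>-\<^sup>1 [I 0] U\<^sub>L\<close> is the holomorphic candidate near \<open>a\<close>; a global one is obtained by
  truncating its Taylor expansion at an order beyond all partial multiplicities.\<close>

definition "V0 = (\<lambda>z. Minv z * (proj_mat r n * UL z))"

lemma hol0_V0: "hol0_mat a r n V0"
  unfolding V0_def by (rule hol0_mat_mult[OF Minv(1) hol0_mat_mult[OF hol0_mat_const[OF proj_mat_carrier] UL]])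

lemma V0_T:
  assumes s: "smith_at z" and Minv: "Minv z \<in> carrier_mat r r" "Minv z * M z = 1\<^sub>m r"
    and X1inv: "X1inv z \<in> carrier_mat r r" "X1 z * X1inv z = 1\<^sub>m r"
    and dx: "\<Delta> z * X1 z = M z * \<Delta> z"
  shows "V0 z * T z = \<Delta> z * L z"
proof -
  from s have c: "T z \<in> carrier_mat n n" "UL z \<in> carrier_mat n n" "WR z \<in> carrier_mat n n"
    by (auto simp: smith_at_def)
  have PW: "proj_mat r n * WR z \<in> carrier_mat r n" by (rule mult_carrier_mat[OF proj_mat_carrier c(3)])
  have Minv_\<Delta>: "Minv z * \<Delta> z = \<Delta> z * X1inv z"
  proof -
    have "Minv z * \<Delta> z = Minv z * \<Delta> z * (X1 z * X1inv z)"
      using X1inv(2) right_mult_one_mat[OF mult_carrier_mat[OF Minv(1) \<Delta>_carrier(1)[of z]]] by simp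
    also have "\<dots> = Minv z * (\<Delta> z * X1 z) * X1inv z"
      using assoc_mult_mat[OF mult_carrier_mat[OF Minv(1) \<Delta>_carrier(1)] X1_carrier X1inv(1)]
        assoc_mult_mat[OF Minv(1) \<Delta>_carrier(1) X1_carrier] by simp
    also have "\<dots> = (Minv z * M z) * \<Delta> z * X1inv z"
      unfolding dx using assoc_mult_mat[OF Minv(1) M_carrier \<Delta>_carrier(1)] by simp
    also have "\<dots> = \<Delta> z * X1inv z" using Minv(2) left_mult_one_mat[OF \<Delta>_carrier(1)[of z]] by simp
    finally show ?thesis .
  qed
  have "V0 z * T z = Minv z * (proj_mat r n * (UL z * T z))"
    unfolding V0_def
    using assoc_mult_mat[OF Minv(1) mult_carrier_mat[OF proj_mat_carrier c(2)] c(1)]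
      assoc_mult_mat[OF proj_mat_carrier c(2,1)] by simp
  also have "\<dots> = Minv z * (\<Delta> z * (proj_mat r n * WR z))"
    unfolding smith_at_UL_T[OF s] assoc_mult_mat[OF proj_mat_carrier D_carrier(1) c(3), symmetric]
      proj_mat_mult_D
    using assoc_mult_mat[OF \<Delta>_carrier(1) proj_mat_carrier c(3)] by simp
  also have "\<dots> = \<Delta> z * L z"
    unfolding L_def assoc_mult_mat[OF Minv(1) \<Delta>_carrier(1) PW, symmetric] Minv_\<Delta>
    by (rule assoc_mult_mat[OF \<Delta>_carrier(1) X1inv(1) PW])
  finally show ?thesis .
qed

lemma eventually_V0_T: "\<forall>\<^sub>F z in nhds a. V0 z * T z = \<Delta> z * L z"
  using eventually_smith_at hol0_matD(1)[OF Minv(1)] Minv(2) hol0_matD(1)[OF X1inv(1)] X1inv(2)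
    eventually_\<Delta>_X1_eq_M
  by eventually_elim (rule V0_T, auto)

lemma factored_at_X_\<Delta>inv:
  assumes b: "factored_at z"
  shows "X z * \<Delta>inv z = Dinv z * N z"
proof -
  note c = factored_at_carriers[OF b]
  from b have za: "z \<noteq> a" and dx: "D z * X z = N z * \<Delta> z" by (auto simp: factored_at_def)
  have "X z = (Dinv z * D z) * X z" using D_Dinv(2)[OF za] c(5) by simp
  also have "\<dots> = Dinv z * (N z * \<Delta> z)" unfolding assoc_mult_mat[OF D_carrier(2) D_carrier(1) c(5)] dx ..
  finally have "X z * \<Delta>inv z = Dinv z * (N z * \<Delta> z) * \<Delta>inv z" by simp
  also have "\<dots> = Dinv z * (N z * (\<Delta> z * \<Delta>inv z))"
    using assoc_mult_mat[OF D_carrier(2) mult_carrier_mat[OF c(6) \<Delta>_carrier(1)] \<Delta>_carrier(2)]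
      assoc_mult_mat[OF c(6) \<Delta>_carrier(1) \<Delta>_carrier(2)] by simp
  also have "\<dots> = Dinv z * N z" using c(6) \<Delta>_\<Delta>inv(1)[OF za] by simp
  finally show ?thesis .
qed

lemma factored_at_V0_carrier: "factored_at z \<Longrightarrow> V0 z \<in> carrier_mat r n"
  unfolding V0_def factored_at_def smith_at_def by (auto intro!: mult_carrier_mat)

lemma factored_at_N_V0_top:
  assumes b: "factored_at z" and ij: "i < r" "j < n"
  shows "(N z * V0 z) $$ (i,j) = UL z $$ (i,j)"
proof -
  note c = factored_at_carriers[OF b] and V0c = factored_at_V0_carrier[OF b]
  have Mi: "Minv z \<in> carrier_mat r r" "M z * Minv z = 1\<^sub>m r" using b by (auto simp: factored_at_def)
  have "proj_mat r n * (N z * V0 z) = (proj_mat r n * N z) * V0 z"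
    by (rule assoc_mult_mat[symmetric, OF proj_mat_carrier c(6) V0c])
  also have "\<dots> = (M z * Minv z) * (proj_mat r n * UL z)"
    unfolding proj_mat_mult_N[OF c(6)] V0_def
    using assoc_mult_mat[OF M_carrier[of z] Mi(1) mult_carrier_mat[OF proj_mat_carrier c(2)]] by simp
  also have "\<dots> = proj_mat r n * UL z"
    using Mi(2) left_mult_one_mat[OF mult_carrier_mat[OF proj_mat_carrier c(2)]] by simp
  finally have "mat r n (\<lambda>(i,j). (N z * V0 z) $$ (i,j)) = mat r n (\<lambda>(i,j). UL z $$ (i,j))"
    unfolding proj_mat_mult[OF r_le_n mult_carrier_mat[OF c(6) V0c]] proj_mat_mult[OF r_le_n c(2)] .
  from arg_cong[OF this, of "\<lambda>A. A $$ (i,j)"] show ?thesis using ij by simp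
qed

lemma factored_at_Y_\<Delta>inv_V0:
  assumes b: "factored_at z"
  shows "Y z * \<Delta>inv z * V0 z - mat_inv (T z) = UR z * (N z * V0 z - UL z)"
proof -
  note c = factored_at_carriers[OF b] and V0c = factored_at_V0_carrier[OF b]
  have NV0: "N z * V0 z \<in> carrier_mat n n" by (rule mult_carrier_mat[OF c(6) V0c])
  have "Y z * \<Delta>inv z * V0 z = UR z * (Dinv z * (N z * V0 z))"
    unfolding Y_eq_UR_X[OF factored_at_smith_at[OF b] c(4)]
    using assoc_mult_mat[OF c(3,5) \<Delta>_carrier(2)[of z]] factored_at_X_\<Delta>inv[OF b]
      assoc_mult_mat[OF c(3) mult_carrier_mat[OF D_carrier(2)[of z] c(6)] V0c]
      assoc_mult_mat[OF D_carrier(2)[of z] c(6) V0c] by simp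
  moreover have "mat_inv (T z) = UR z * (Dinv z * UL z)"
    using mat_inv_T(1) b by (simp add: factored_at_def)
  ultimately have "Y z * \<Delta>inv z * V0 z - mat_inv (T z) = UR z * (Dinv z * (N z * V0 z - UL z))"
    using mult_minus_distrib_mat[OF D_carrier(2) NV0 c(2)]
      mult_minus_distrib_mat[OF c(3) mult_carrier_mat[OF D_carrier(2) NV0] mult_carrier_mat[OF D_carrier(2) c(2)]]
    by simp
  also have "\<dots> = UR z * (N z * V0 z - UL z)"
    using Dinv_mult_eq[OF minus_carrier_mat[OF c(2)]] factored_at_N_V0_top[OF b] c(2) NV0 r_le_n
    by simp
  finally show ?thesis .
qed

lemma represents_inverse_V0: "represents_inverse V0"
proof -
  have "hol0_mat a n n (\<lambda>z. UR z * (N z * V0 z - UL z))"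
    by (rule hol0_mat_mult[OF UR hol0_mat_minus[OF hol0_mat_mult[OF hol0_N hol0_V0] UL]])
  moreover have "\<forall>\<^sub>F z in at a. Y z * \<Delta>inv z * V0 z - mat_inv (T z) = UR z * (N z * V0 z - UL z)"
    using eventually_factored_at by (rule eventually_mono) (rule factored_at_Y_\<Delta>inv_V0)
  ultimately show ?thesis unfolding dot_eq_def by blast
qed

lemma V0_center_right_inverse:
  "V0 a * (WL a * (transpose_mat (proj_mat r n) * M a)) = 1\<^sub>m r"
proof -
  have c: "UL a \<in> carrier_mat n n" "WL a \<in> carrier_mat n n" and inv: "UL a * WL a = 1\<^sub>m n"
    using smith_at_center by (auto simp: smith_at_def)
  have Mi: "Minv a \<in> carrier_mat r r" "Minv a * M a = 1\<^sub>m r"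
    using hol0_mat_carrier[OF Minv(1)] eventually_nhds_x_imp_x[OF Minv(2)] by auto
  let ?P = "proj_mat r n :: complex mat"
  have PT: "transpose_mat ?P \<in> carrier_mat n r" by simp
  have PM: "transpose_mat ?P * M a \<in> carrier_mat n r" by (rule mult_carrier_mat[OF PT M_carrier])
  have "V0 a * (WL a * (transpose_mat ?P * M a)) = Minv a * (?P * (UL a * (WL a * (transpose_mat ?P * M a))))"
    unfolding V0_def
    using assoc_mult_mat[OF Mi(1) mult_carrier_mat[OF proj_mat_carrier c(1)] mult_carrier_mat[OF c(2) PM]]
      assoc_mult_mat[OF proj_mat_carrier c(1) mult_carrier_mat[OF c(2) PM]] by simp
  also have "\<dots> = Minv a * ((?P * transpose_mat ?P) * M a)"
    unfolding mult_cancel_right_inverse[OF c PM inv]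
      assoc_mult_mat[OF proj_mat_carrier PT M_carrier] ..
  also have "\<dots> = 1\<^sub>m r" using Mi by (simp add: proj_mat_mult_transpose[OF r_le_n] left_mult_one_mat[OF M_carrier])
  finally show ?thesis .
qed

text \<open>A factorization \<open>V T = \<Delta> K\<close> near \<open>a\<close> with \<open>K(a)\<close> free of zero rows makes \<open>m i\<close> the
  multiplicity of the \<open>i\<close>-th row of \<open>V\<close>; a right inverse of \<open>V(a)\<close> gives the independence of the
  rows at \<open>a\<close>.\<close>

lemma row_zero_order:
  assumes V: "hol_mat \<Omega> r n V" and K: "hol0_mat a r n K" "row (K a) i \<noteq> 0\<^sub>v n"
    and VT: "\<forall>\<^sub>F z in nhds a. V z * T z = \<Delta> z * K z" and i: "i < r"
  shows "vec_zero_order a n (\<lambda>z. row (mat_of_row (row (V z) i) * T z) 0) (m i)"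
  unfolding vec_zero_order_def
proof (intro exI[of _ "\<lambda>z. row (K z) i"] conjI allI impI)
  show "\<forall>\<^sub>F z in nhds a. row (K z) i \<in> carrier_vec n"
    using hol0_matD(1)[OF K(1)] by eventually_elim auto
  show "row (K a) i \<noteq> 0\<^sub>v n" by (rule K(2))
  fix j assume j: "j < n"
  have "\<forall>\<^sub>F z in nhds a. K z $$ (i,j) = row (K z) i $ j"
    using hol0_matD(1)[OF K(1)] by eventually_elim (use i j in auto)
  thus "(\<lambda>z. row (K z) i $ j) analytic_on {a}" using hol0_matD(2)[OF K(1) i j] by (rule analytic_at_transfer)
next
  show "\<forall>\<^sub>F z in nhds a. row (mat_of_row (row (V z) i) * T z) 0 = (z - a) ^ m i \<cdot>\<^sub>v row (K z) i"
    using VT eventually_smith_at hol0_matD(1)[OF K(1)] hol0_matD(1)[OF hol_mat_imp_hol0_mat[OF open_\<Omega> a_in_\<Omega> V]]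
  proof eventually_elim
    case (elim z)
    have Tc: "T z \<in> carrier_mat n n" using elim(2) by (simp add: smith_at_def)
    have "row (mat_of_row (row (V z) i) * T z) 0 = row (V z * T z) i"
      by (rule row_mat_of_row_mult[OF elim(4) Tc i])
    also have "\<dots> = row (\<Delta> z * K z) i" unfolding elim(1) ..
    also have "\<dots> = (z - a) ^ m i \<cdot>\<^sub>v row (K z) i"
      unfolding \<Delta>_def mat_diag_mult_left[OF elim(3)] using i elim(3) by (intro eq_vecI) auto
    finally show ?case .
  qed
qed

lemma left_root_fun_row:
  assumes V: "hol_mat \<Omega> r n V" and B: "B \<in> carrier_mat n r" "V a * B = 1\<^sub>m r"
    and zero_order: "vec_zero_order a n (\<lambda>z. row (mat_of_row (row (V z) i) * T z) 0) (m i)"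
    and i: "i < r"
  shows "left_root_fun \<Omega> a n T (\<lambda>z. row (V z) i)"
proof -
  have Vc: "V z \<in> carrier_mat r n" if "z \<in> \<Omega>" for z using V that by (simp add: hol_mat_def)
  have Va: "V a \<in> carrier_mat r n" by (rule Vc[OF a_in_\<Omega>])
  have Tc: "T a \<in> carrier_mat n n" using smith_at_center by (simp add: smith_at_def)
  let ?A = "mat_of_row (row (V a) i) * T a"
  have A: "?A \<in> carrier_mat 1 n"
    by (rule mult_carrier_mat[OF mat_of_row_carrier(1)[OF row_carrier_vec[OF i Va]] Tc])
  have row0: "row ?A 0 = 0\<^sub>v n"
    using vec_zero_order_eq_0_iff[OF zero_order] m_pos[OF i] by simp
  have "?A = 0\<^sub>m 1 n"
  proof (rule eq_matI)
    fix i' j assume "i' < dim_row (0\<^sub>m 1 n :: complex mat)" "j < dim_col (0\<^sub>m 1 n :: complex mat)"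
    hence ij: "i' = 0" "j < n" by auto
    hence "?A $$ (i',j) = row ?A 0 $ j" using carrier_matD[OF A] by simp
    thus "?A $$ (i',j) = 0\<^sub>m 1 n $$ (i',j)" unfolding row0 using ij by simp
  qed (use A in auto)
  moreover have "row (V z) i \<in> carrier_vec n" if "z \<in> \<Omega>" for z
    by (rule row_carrier_vec[OF i Vc[OF that]])
  moreover have "(\<lambda>z. row (V z) i $ j) holomorphic_on \<Omega>" if j: "j < n" for j
  proof (rule holomorphic_transform)
    show "(\<lambda>z. V z $$ (i,j)) holomorphic_on \<Omega>" using V i j by (simp add: hol_mat_def)
    show "V z $$ (i,j) = row (V z) i $ j" if "z \<in> \<Omega>" for z using Vc[OF that] i j by simp
  qed
  moreover have "row (V a) i \<noteq> 0\<^sub>v n" by (rule right_inverse_row_nonzero[OF Va B i])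
  ultimately show ?thesis unfolding left_root_fun_def by (intro conjI ballI allI impI)
qed

lemma left_canonicalI:
  assumes V: "hol_mat \<Omega> r n V" and B: "B \<in> carrier_mat n r" "V a * B = 1\<^sub>m r"
    and K: "hol0_mat a r n K" "\<And>i. i < r \<Longrightarrow> row (K a) i \<noteq> 0\<^sub>v n"
    and VT: "\<forall>\<^sub>F z in nhds a. V z * T z = \<Delta> z * K z"
  shows "left_canonical \<Omega> a n T m V"
proof -
  have zero_order: "vec_zero_order a n (\<lambda>z. row (mat_of_row (row (V z) i) * T z) 0) (m i)"
    if "i < r" for i by (rule row_zero_order[OF V K(1) K(2)[OF that] VT that])
  have mult: "left_root_mult a n T (\<lambda>z. row (V z) i) = m i" if "i < r" for i
    unfolding left_root_mult_def by (rule the_vec_zero_order[OF zero_order[OF that]])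
  have "(\<Sum>i<r. left_root_mult a n T (\<lambda>z. row (V z) i)) = (\<Sum>i<r. m i)"
    by (rule sum.cong) (simp_all add: mult)
  moreover have "left_root_mult a n T (\<lambda>z. row (V z) j) \<le> left_root_mult a n T (\<lambda>z. row (V z) i)"
    if ij: "i \<le> j" "j < r" for i j
  proof -
    have "m j \<le> m i" using m_antimono r_le_n ij by auto
    thus ?thesis using mult ij by simp
  qed
  moreover have "c = 0\<^sub>v r" if "c \<in> carrier_vec r" "transpose_mat (V a) *\<^sub>v c = 0\<^sub>v n" for c
  proof (rule transpose_right_inverse_inj[OF _ B that])
    show "V a \<in> carrier_mat r n" using V a_in_\<Omega> by (simp add: hol_mat_def)
  qed
  moreover have "left_root_fun \<Omega> a n T (\<lambda>z. row (V z) i)" if "i < r" for i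
    by (rule left_root_fun_row[OF V B zero_order[OF that] that])
  ultimately show ?thesis
    unfolding left_canonical_def Let_def r_def[symmetric] using V by (intro conjI allI impI ballI)
qed

lemma V0_truncation:
  obtains P H where "hol_mat UNIV r n P" "hol0_mat a r n H" "H a = 0\<^sub>m r n"
    "\<forall>\<^sub>F z in nhds a. P z = V0 z + \<Delta> z * H z"
proof -
  define k where "k = Suc (m 0)"
  have m_less: "m i < k" if "i < r" for i using m_antimono that r_le_n by (simp add: k_def le_imp_less_Suc)
  obtain P H where P: "hol_mat UNIV r n P" and H: "hol0_mat a r n H"
    and P_eq: "\<forall>\<^sub>F z in nhds a. P z = V0 z + (z - a) ^ k \<cdot>\<^sub>m H z"
    by (rule hol0_mat_polynomial_approx[OF hol0_V0])
  define H' where "H' = (\<lambda>z. mat_diag r (\<lambda>i. (z - a) ^ (k - m i)) * H z)"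
  have H': "hol0_mat a r n H'"
    unfolding H'_def by (rule hol0_mat_mult[OF hol0_mat_diag H]) (auto intro!: analytic_intros)
  have \<Delta>_H': "\<Delta> z * H' z = (z - a) ^ k \<cdot>\<^sub>m H z" if Hc: "H z \<in> carrier_mat r n" for z
  proof -
    have "\<Delta> z * H' z = mat_diag r (\<lambda>i. (z - a) ^ m i * (z - a) ^ (k - m i)) * H z"
      unfolding H'_def \<Delta>_def assoc_mult_mat[OF mat_diag_dim mat_diag_dim Hc, symmetric] by simp
    also have "mat_diag r (\<lambda>i. (z - a) ^ m i * (z - a) ^ (k - m i)) = mat_diag r (\<lambda>i. (z - a) ^ k)"
      by (rule mat_diag_cong) (simp add: m_less less_imp_le flip: power_add)
    also have "mat_diag r (\<lambda>i. (z - a) ^ k) * H z = (z - a) ^ k \<cdot>\<^sub>m H z"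
      unfolding mat_diag_mult_left[OF Hc] using Hc by (intro eq_matI) auto
    finally show ?thesis .
  qed
  have "\<forall>\<^sub>F z in nhds a. P z = V0 z + \<Delta> z * H' z"
    using P_eq hol0_matD(1)[OF H] by eventually_elim (simp add: \<Delta>_H')
  moreover have "H' a = 0\<^sub>m r n"
    unfolding H'_def mat_diag_mult_left[OF hol0_mat_carrier[OF H]] using m_less by (intro eq_matI) auto
  ultimately show ?thesis using that P H' by blast
qed

lemma V0_truncation_mult_T:
  assumes H: "hol0_mat a r n H" and P: "\<forall>\<^sub>F z in nhds a. P z = V0 z + \<Delta> z * H z"
  shows "\<forall>\<^sub>F z in nhds a. P z * T z = \<Delta> z * (L z + H z * T z)"
  using P eventually_V0_T hol0_matD(1)[OF hol0_V0] hol0_matD(1)[OF H] hol0_matD(1)[OF hol0_T]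
    hol0_matD(1)[OF hol0_L]
proof eventually_elim
  case (elim z)
  have "P z * T z = V0 z * T z + \<Delta> z * H z * T z"
    unfolding elim(1) by (rule add_mult_distrib_mat[OF elim(3) mult_carrier_mat[OF \<Delta>_carrier(1) elim(4)] elim(5)])
  also have "\<dots> = \<Delta> z * (L z + H z * T z)"
    unfolding elim(2) assoc_mult_mat[OF \<Delta>_carrier(1) elim(4,5)]
    by (rule mult_add_distrib_mat[symmetric, OF \<Delta>_carrier(1) elim(6) mult_carrier_mat[OF elim(4,5)]])
  finally show ?case .
qed

lemma exists_left_canonical: "\<exists>V. left_canonical \<Omega> a n T m V \<and> represents_inverse V"
proof -
  obtain P H where P: "hol_mat UNIV r n P" and H: "hol0_mat a r n H" "H a = 0\<^sub>m r n"
    and P_eq: "\<forall>\<^sub>F z in nhds a. P z = V0 z + \<Delta> z * H z"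
    by (rule V0_truncation)
  have Pa: "P a = V0 a"
    using eventually_nhds_x_imp_x[OF P_eq] hol0_mat_carrier[OF hol0_V0]
    by (simp add: H(2) right_mult_zero_mat[OF \<Delta>_carrier(1)])
  have K: "hol0_mat a r n (\<lambda>z. L z + H z * T z)"
    by (rule hol0_mat_add[OF hol0_L hol0_mat_mult[OF H(1) hol0_T]])
  have "left_canonical \<Omega> a n T m P"
  proof (rule left_canonicalI[OF hol_mat_subset[OF P subset_UNIV] _ _ K _ V0_truncation_mult_T[OF H(1) P_eq]])
    have "WL a \<in> carrier_mat n n" using smith_at_center by (simp add: smith_at_def)
    moreover have "transpose_mat (proj_mat r n) \<in> carrier_mat n r" by simp
    ultimately show "WL a * (transpose_mat (proj_mat r n) * M a) \<in> carrier_mat n r"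
      using M_carrier by (blast intro: mult_carrier_mat)
    show "P a * (WL a * (transpose_mat (proj_mat r n) * M a)) = 1\<^sub>m r"
      unfolding Pa by (rule V0_center_right_inverse)
    have "L a + H a * T a = L a"
      unfolding H(2) using hol0_mat_carrier[OF hol0_L] hol0_mat_carrier[OF hol0_T] by simp
    thus "row (L a + H a * T a) i \<noteq> 0\<^sub>v n" if "i < r" for i
      using right_inverse_row_nonzero[OF hol0_mat_carrier[OF hol0_L] hol0_mat_carrier[OF hol0_Y]
        eventually_nhds_x_imp_x[OF eventually_L_Y] that] by simp
  qed
  thus ?thesis using represents_inverse_add[OF hol0_V0 H(1) P_eq represents_inverse_V0] by blast
qed

lemma represents_inverse_iff:
  assumes V1: "hol_mat \<Omega> r n V1" and inv1: "represents_inverse V1" and V2: "hol_mat \<Omega> r n V2"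
  shows "represents_inverse V2 \<longleftrightarrow> (\<exists>H. hol_mat \<Omega> r n H \<and> (\<forall>z\<in>\<Omega>. V2 z = V1 z + \<Delta> z * H z))"
proof
  assume "represents_inverse V2"
  thus "\<exists>H. hol_mat \<Omega> r n H \<and> (\<forall>z\<in>\<Omega>. V2 z = V1 z + \<Delta> z * H z)"
    using represents_inverse_unique[OF V1 V2 inv1] by blast
next
  assume "\<exists>H. hol_mat \<Omega> r n H \<and> (\<forall>z\<in>\<Omega>. V2 z = V1 z + \<Delta> z * H z)"
  then obtain H where H: "hol_mat \<Omega> r n H" "\<forall>z\<in>\<Omega>. V2 z = V1 z + \<Delta> z * H z" by blast
  have "\<forall>\<^sub>F z in nhds a. V2 z = V1 z + \<Delta> z * H z"
    using eventually_nhds_in_open[OF open_\<Omega> a_in_\<Omega>] H(2) by (auto elim: eventually_mono)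
  thus "represents_inverse V2"
    using represents_inverse_add[OF hol_mat_imp_hol0_mat[OF open_\<Omega> a_in_\<Omega> V1]
        hol_mat_imp_hol0_mat[OF open_\<Omega> a_in_\<Omega> H(1)] _ inv1] by blast
qed

end

theorem mainTheorem2:
  fixes \<Omega> :: "complex set" and l0 :: complex and n :: nat
    and T Y :: "complex \<Rightarrow> complex mat" and m :: "nat \<Rightarrow> nat"
  assumes "open \<Omega>" and "connected \<Omega>" and "l0 \<in> \<Omega>"
    and "hol_mat \<Omega> n n T"
    and "\<exists>z\<in>\<Omega>. det (T z) \<noteq> 0"
    and "det (T l0) = 0"
    and "partial_mults l0 n T m"
    and "right_canonical \<Omega> l0 n T m Y"
  defines "r \<equiv> kernel_dim (T l0)"
    and "\<Delta> \<equiv> (\<lambda>z. mat_diag (kernel_dim (T l0)) (\<lambda>i. (z - l0) ^ m i))"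
    and "\<Delta>inv \<equiv> (\<lambda>z. mat_diag (kernel_dim (T l0)) (\<lambda>i. 1 / (z - l0) ^ m i))"
    and "Tinv \<equiv> (\<lambda>z. mat_inv (T z))"
  shows "(\<exists>V. left_canonical \<Omega> l0 n T m V \<and>
             dot_eq l0 n n Tinv (\<lambda>z. Y z * \<Delta>inv z * V z))
       \<and> (\<forall>V1 V2. hol_mat \<Omega> r n V1 \<and> dot_eq l0 n n Tinv (\<lambda>z. Y z * \<Delta>inv z * V1 z)
             \<and> hol_mat \<Omega> r n V2 \<longrightarrow>
             (dot_eq l0 n n Tinv (\<lambda>z. Y z * \<Delta>inv z * V2 z) \<longleftrightarrow>
              (\<exists>H. hol_mat \<Omega> r n H \<and> (\<forall>z\<in>\<Omega>. V2 z = V1 z + \<Delta> z * H z))))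
       \<and> (\<forall>V. hol_mat \<Omega> r n V \<and> dot_eq l0 n n Tinv (\<lambda>z. Y z * \<Delta>inv z * V z) \<longrightarrow>
             dot_eq l0 r r (\<lambda>z. \<Delta>inv z * V z * T z * Y z * \<Delta>inv z) \<Delta>inv)"
proof -
  obtain UL UR where U: "unimodular0 l0 n UL" "unimodular0 l0 n UR"
    and m: "\<forall>i j. i \<le> j \<longrightarrow> j < n \<longrightarrow> m j \<le> m i"
    and smith: "\<forall>\<^sub>F z in nhds l0. UL z * T z * UR z = mat_diag n (\<lambda>i. (z - l0) ^ m i)"
    using assms(7) unfolding partial_mults_def by blast
  obtain WL WR where "hol0_mat l0 n n WL" "\<forall>\<^sub>F z in nhds l0. UL z * WL z = 1\<^sub>m n \<and> WL z * UL z = 1\<^sub>m n"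
    and "hol0_mat l0 n n WR" "\<forall>\<^sub>F z in nhds l0. UR z * WR z = 1\<^sub>m n \<and> WR z * UR z = 1\<^sub>m n"
    using U unfolding unimodular0_def by blast
  then interpret canonical_system \<Omega> l0 n T m UL UR WL WR Y
    using assms(1,3,4,8) U m smith by unfold_locales (auto simp: unimodular0_def)
  show ?thesis
    unfolding assms(9-12)
    using exists_left_canonical represents_inverse_iff
      biorthogonality[OF hol_mat_imp_hol0_mat[OF open_\<Omega> a_in_\<Omega>]]
    unfolding r_def \<Delta>_def \<Delta>inv_def by blast
qed

end
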